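(* The exponential generating function $N_1(z)=\sum_{n} N_{1,n}\frac{z^n}{n!}$ of vertex-labeled normal networks with exactly one reticulation vertex ($N_{1,n}$ being the number of such networks with $n$ vertices) is \[ N_1(z)=\frac{z\left(1-\sqrt{1-2z^2}\,\right)^3}{2(1-2z^2)^{3/2}}=z\frac{\tilde{a}_1(z^2)-\tilde{b}_1(z^2)\sqrt{1-2z^2}}{(1-2z^2)^{3/2}}, \] where $\tilde{a}_1(z)=2-3z$ and $\tilde{b}_1(z)=2-z$.
   Context: A phylogenetic network is a connected rooted directed acyclic graph whose vertices are: a root with in-degree 0 and out-degree 2 (unless the network is a single vertex); tree vertices with in-degree 1 and out-degree 2; reticulation vertices with in-degree 2 and out-degree 1; leaves with in-degree 1 and out-degree 0. A tree-child network is a phylogenetic network in which every non-leaf vertex has at least one child that is not a reticulation vertex. A normal network is a tree-child network in which, whenever there is a directed path of length at least 2 from $u$ to $v$, there is no edge from $u$ to $v$. A vertex-labeled network with $n$ vertices has its vertices labeled by distinct labels $1,\dots,n$. *)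

theory Defs
  imports Complex_Main
begin

text \<open>A vertex-labeled network with n vertices has vertex set {1..n};
  it is determined by its set of directed edges E.\<close>

definition verts :: "nat \<Rightarrow> nat set" where
  "verts n = {1..n}"

definition indeg :: "(nat \<times> nat) set \<Rightarrow> nat \<Rightarrow> nat" where
  "indeg E v = card {u. (u, v) \<in> E}"

definition outdeg :: "(nat \<times> nat) set \<Rightarrow> nat \<Rightarrow> nat" where
  "outdeg E v = card {w. (v, w) \<in> E}"

definition is_reticulation :: "(nat \<times> nat) set \<Rightarrow> nat \<Rightarrow> bool" where
  "is_reticulation E v \<longleftrightarrow> indeg E v = 2 \<and> outdeg E v = 1"

definition is_leaf :: "(nat \<times> nat) set \<Rightarrow> nat \<Rightarrow> bool" where
  "is_leaf E v \<longleftrightarrow> indeg E v = 1 \<and> outdeg E v = 0"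

definition phylo_network :: "nat \<Rightarrow> (nat \<times> nat) set \<Rightarrow> bool" where
  "phylo_network n E \<longleftrightarrow>
     n \<ge> 1 \<and>
     E \<subseteq> verts n \<times> verts n \<and>
     (\<forall>v. (v, v) \<notin> E\<^sup>+) \<and>
     (\<forall>u\<in>verts n. \<forall>v\<in>verts n. (u, v) \<in> (E \<union> E\<inverse>)\<^sup>*) \<and>
     ((n = 1 \<and> E = {}) \<or>
      (card {v \<in> verts n. indeg E v = 0} = 1 \<and>
       (\<forall>v\<in>verts n.
          (indeg E v = 0 \<and> outdeg E v = 2) \<or>
          (indeg E v = 1 \<and> outdeg E v = 2) \<or>
          (indeg E v = 2 \<and> outdeg E v = 1) \<or>
          (indeg E v = 1 \<and> outdeg E v = 0))))"

definition tree_child :: "nat \<Rightarrow> (nat \<times> nat) set \<Rightarrow> bool" where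
  "tree_child n E \<longleftrightarrow> phylo_network n E \<and>
     (\<forall>v\<in>verts n. outdeg E v \<noteq> 0 \<longrightarrow> (\<exists>w. (v, w) \<in> E \<and> \<not> is_reticulation E w))"

definition normal_network :: "nat \<Rightarrow> (nat \<times> nat) set \<Rightarrow> bool" where
  "normal_network n E \<longleftrightarrow> tree_child n E \<and>
     (\<forall>u v. (u, v) \<in> E O E\<^sup>+ \<longrightarrow> (u, v) \<notin> E)"

definition N1 :: "nat \<Rightarrow> nat" where
  "N1 n = card {E. normal_network n E \<and> card {v \<in> verts n. is_reticulation E v} = 1}"

definition a1 :: "real \<Rightarrow> real" where "a1 z = 2 - 3 * z"
definition b1 :: "real \<Rightarrow> real" where "b1 z = 2 - z"

end

theory Submission
  imports Defs "HOL-Analysis.Generalised_Binomial_Theorem"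
begin

(* Mark a network with a single reticulation r by one of the two parents a of r. A leaf x
   whose parent y has a second child z other than r can be pruned: delete x and y and attach
   the parent of y to z. This yields a marked network with two vertices fewer, and every
   marked network arises exactly once by grafting a leaf x with parent y onto the edge into
   a vertex v other than r. All (n - 1) / 2 leaves are prunable except the other children of
   a and b and the child of r; recording which of these three are leaves turns the double
   count into a recurrence for the eight flag classes that closes on itself, starting from
   the 7! marked networks on seven vertices. Its solution is expressed through the
   coefficients of (1 - 2 w) powr (-3/2), which gives the generating function. *)

section \<open>Grafting and pruning a leaf\<close>

definition parents :: "(nat \<times> nat) set \<Rightarrow> nat \<Rightarrow> nat set" where
  "parents E v = {u. (u, v) \<in> E}"

definition children :: "(nat \<times> nat) set \<Rightarrow> nat \<Rightarrow> nat set" where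
  "children E v = {w. (v, w) \<in> E}"

text \<open>Grafting subdivides the edges into \<open>v\<close> by a new vertex \<open>y\<close> carrying a new leaf \<open>x\<close>;
  pruning the leaf \<open>x\<close> with parent \<open>y\<close> and sibling \<open>z\<close> undoes this.\<close>

definition graft :: "(nat \<times> nat) set \<Rightarrow> nat \<Rightarrow> nat \<Rightarrow> nat \<Rightarrow> (nat \<times> nat) set" where
  "graft E x y v = {e \<in> E. snd e \<noteq> v} \<union> {(p, y) |p. (p, v) \<in> E} \<union> {(y, v), (y, x)}"

definition prune :: "(nat \<times> nat) set \<Rightarrow> nat \<Rightarrow> nat \<Rightarrow> nat \<Rightarrow> (nat \<times> nat) set" where
  "prune E x y z = {e \<in> E. fst e \<notin> {x, y} \<and> snd e \<notin> {x, y}} \<union> {(p, z) |p. (p, y) \<in> E}"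

context
  fixes E :: "(nat \<times> nat) set" and V :: "nat set" and x y v :: nat
  assumes edges: "E \<subseteq> V \<times> V" and x_new: "x \<notin> V" and y_new: "y \<notin> V" and x_ne_y: "x \<noteq> y"
begin

lemma parents_graft_old: "u \<in> V \<Longrightarrow> u \<noteq> v \<Longrightarrow> parents (graft E x y v) u = parents E u"
  using edges x_new y_new unfolding parents_def graft_def by auto

lemma parents_graft_target: "v \<in> V \<Longrightarrow> parents (graft E x y v) v = {y}"
  using edges x_new y_new x_ne_y unfolding parents_def graft_def by auto

lemma parents_graft_new_parent: "v \<in> V \<Longrightarrow> parents (graft E x y v) y = parents E v"
  using edges x_new y_new x_ne_y unfolding parents_def graft_def by auto

lemma parents_graft_new_leaf: "v \<in> V \<Longrightarrow> parents (graft E x y v) x = {y}"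
  using edges x_new y_new x_ne_y unfolding parents_def graft_def by auto

lemma children_graft_old:
  "u \<in> V \<Longrightarrow> children (graft E x y v) u = (\<lambda>w. if w = v then y else w) ` children E u"
  using edges x_new y_new unfolding children_def graft_def by (auto simp: image_iff)

lemma children_graft_new_parent: "children (graft E x y v) y = {v, x}"
  using edges x_new y_new x_ne_y unfolding children_def graft_def by auto

lemma children_graft_new_leaf: "children (graft E x y v) x = {}"
  using edges x_new y_new x_ne_y unfolding children_def graft_def by auto

lemma prune_graft: "v \<in> V \<Longrightarrow> prune (graft E x y v) x y v = E"
  using edges x_new y_new x_ne_y unfolding prune_def graft_def by auto

lemma graft_edges: "v \<in> V \<Longrightarrow> graft E x y v \<subseteq> insert x (insert y V) \<times> insert x (insert y V)"
  using edges unfolding graft_def by auto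

lemma graft_rtrancl_collapse:
  assumes "v \<in> V" and "(u, w) \<in> (graft E x y v)\<^sup>*"
  shows "((if u \<in> {x, y} then v else u), (if w \<in> {x, y} then v else w)) \<in> E\<^sup>*"
  using assms(2)
proof (induction rule: rtrancl_induct)
  case (step w1 w2)
  have "((if w1 \<in> {x, y} then v else w1), (if w2 \<in> {x, y} then v else w2)) \<in> E\<^sup>="
    using step(2) edges x_new y_new \<open>v \<in> V\<close> unfolding graft_def by auto
  then show ?case
    using step(3) by (auto intro: rtrancl_into_rtrancl)
qed simp

lemma graft_trancl_old:
  assumes "v \<in> V" and "(u, w) \<in> (graft E x y v)\<^sup>+" and "u \<in> V" "w \<in> V" "u \<noteq> w"
  shows "(u, w) \<in> E\<^sup>+"
proof -
  have "(u, w) \<in> E\<^sup>*"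
    using graft_rtrancl_collapse[OF assms(1) trancl_into_rtrancl[OF assms(2)]] assms(3,4) x_new y_new
    by (auto split: if_splits)
  then show ?thesis
    using \<open>u \<noteq> w\<close> by (simp add: rtrancl_eq_or_trancl)
qed

end

lemma prune_trancl: "(y, z) \<in> E \<Longrightarrow> (prune E x y z)\<^sup>+ \<subseteq> E\<^sup>+"
proof -
  assume "(y, z) \<in> E"
  then have "prune E x y z \<subseteq> E\<^sup>+"
    unfolding prune_def by auto
  then show ?thesis
    using trancl_mono_subset trancl_id[OF trans_trancl] by metis
qed

section \<open>Networks with one marked reticulation\<close>

text \<open>For one reticulation the tree-child property is automatic and normality says
  exactly that \<open>a\<close> and \<open>b\<close> are incomparable. The rank function \<open>h\<close> witnesses acyclicity;
  it is a parameter so that grafts and prunes can be shown acyclic by exhibiting ranks.\<close>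

locale marked_net =
  fixes V :: "nat set" and E :: "(nat \<times> nat) set"
    and a \<rho> r b c :: nat and h :: "nat \<Rightarrow> nat"
  assumes finite_V: "finite V"
    and edges: "E \<subseteq> V \<times> V"
    and rank: "\<And>u w. (u, w) \<in> E \<Longrightarrow> h u < h w"
    and root_in: "\<rho> \<in> V"
    and parents_root: "parents E \<rho> = {}"
    and children_root: "children E \<rho> \<noteq> {}"
    and root_unique: "\<And>v. v \<in> V \<Longrightarrow> parents E v = {} \<Longrightarrow> v = \<rho>"
    and a_ne_b: "a \<noteq> b"
    and parents_r: "parents E r = {a, b}"
    and children_r: "children E r = {c}"
    and no_path_ab: "(a, b) \<notin> E\<^sup>+"
    and no_path_ba: "(b, a) \<notin> E\<^sup>+"
    and parents_tree: "\<And>v. v \<in> V \<Longrightarrow> v \<noteq> r \<Longrightarrow> parents E v = {} \<or> (\<exists>p. parents E v = {p})"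
    and children_tree: "\<And>v. v \<in> V \<Longrightarrow> v \<noteq> r \<Longrightarrow>
      children E v = {} \<or> (\<exists>c d. c \<noteq> d \<and> children E v = {c, d})"

definition is_marked_net :: "nat set \<Rightarrow> (nat \<times> nat) set \<Rightarrow> nat \<Rightarrow> bool" where
  "is_marked_net V E a \<longleftrightarrow> (\<exists>\<rho> r b c h. marked_net V E a \<rho> r b c h)"

lemma is_marked_netE:
  assumes "is_marked_net V E a"
  obtains \<rho> r b c h where "marked_net V E a \<rho> r b c h"
  using assms unfolding is_marked_net_def by blast

lemma (in marked_net) is_marked_net: "is_marked_net V E a"
  unfolding is_marked_net_def using marked_net_axioms by blast

context marked_net
begin

lemma rank_trancl: "(u, w) \<in> E\<^sup>+ \<Longrightarrow> h u < h w"
  by (induction rule: trancl_induct) (auto dest: rank)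

lemma acyclic: "(u, u) \<notin> E\<^sup>+"
  using rank_trancl by blast

lemma finite_parents: "finite (parents E u)"
  using finite_subset[of "parents E u" V] finite_V edges unfolding parents_def by auto

lemma a_r_edge: "(a, r) \<in> E" and b_r_edge: "(b, r) \<in> E" and r_c_edge: "(r, c) \<in> E"
  using parents_r children_r unfolding parents_def children_def by auto

lemma r_in: "r \<in> V" and a_in: "a \<in> V" and b_in: "b \<in> V" and c_in: "c \<in> V"
  using a_r_edge b_r_edge r_c_edge edges by auto

lemma two_parents_reticulation: "(u, w) \<in> E \<Longrightarrow> (u', w) \<in> E \<Longrightarrow> u \<noteq> u' \<Longrightarrow> w = r"
proof (rule ccontr)
  assume e: "(u, w) \<in> E" "(u', w) \<in> E" "u \<noteq> u'" "w \<noteq> r"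
  then have "w \<in> V"
    using edges by auto
  from parents_tree[OF this e(4)] e show False
    unfolding parents_def by (auto simp: set_eq_iff)
qed

lemma parent_r_iff: "(u, r) \<in> E \<longleftrightarrow> u = a \<or> u = b"
  using parents_r unfolding parents_def by auto

lemma parents_eq: "(u, v) \<in> E \<Longrightarrow> v \<noteq> r \<Longrightarrow> parents E v = {u}"
  using two_parents_reticulation unfolding parents_def by blast

lemma reachable_from_root: "v \<in> V \<Longrightarrow> (\<rho>, v) \<in> E\<^sup>*"
proof (induction "h v" arbitrary: v rule: less_induct)
  case less
  show ?case
  proof (cases "parents E v = {}")
    case True
    then show ?thesis
      using root_unique less by auto
  next
    case False
    then obtain u where u: "(u, v) \<in> E"
      unfolding parents_def by auto
    then have "(\<rho>, u) \<in> E\<^sup>*"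
      using less rank edges by auto
    then show ?thesis
      using u by auto
  qed
qed

lemma a_ne_root: "a \<noteq> \<rho>"
  using reachable_from_root[OF b_in] a_ne_b no_path_ab by (auto simp: rtrancl_eq_or_trancl)

lemma b_ne_root: "b \<noteq> \<rho>"
  using reachable_from_root[OF a_in] a_ne_b no_path_ba by (auto simp: rtrancl_eq_or_trancl)

lemma r_ne_root: "r \<noteq> \<rho>"
  using parents_r parents_root by auto

lemma a_ne_r: "a \<noteq> r" and b_ne_r: "b \<noteq> r" and c_ne_r: "c \<noteq> r"
  using rank[OF a_r_edge] rank[OF b_r_edge] rank[OF r_c_edge] by auto

lemma c_ne_a: "c \<noteq> a" and c_ne_b: "c \<noteq> b"
  using rank[OF r_c_edge] rank[OF a_r_edge] rank[OF b_r_edge] by auto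

lemma c_ne_root: "c \<noteq> \<rho>"
  using r_c_edge parents_root unfolding parents_def by auto

lemma parents_singleton: "v \<in> V \<Longrightarrow> v \<noteq> \<rho> \<Longrightarrow> v \<noteq> r \<Longrightarrow> \<exists>p. parents E v = {p}"
  using parents_tree root_unique by blast

lemma reticulation_parents_unique:
  assumes "a \<noteq> b'" and "parents E r' = {a, b'}"
  shows "r' = r \<and> b' = b"
proof -
  have "r' = r"
    using assms two_parents_reticulation unfolding parents_def by blast
  then show ?thesis
    using assms parents_r a_ne_b by (auto simp: doubleton_eq_iff)
qed

end

lemma member_two_children:
  assumes "x \<in> A" and "A = {} \<or> (\<exists>c d. c \<noteq> d \<and> A = {c, d})"
  obtains z where "z \<noteq> x" and "A = {x, z}"
  using assms by (metis doubleton_eq_iff empty_iff insertE)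

lemma tree_children_image:
  assumes "inj_on f A" and "A = {} \<or> (\<exists>c d. c \<noteq> d \<and> A = {c, d})"
  shows "f ` A = {} \<or> (\<exists>c d. c \<noteq> d \<and> f ` A = {c, d})"
  using assms by (auto dest: inj_onD)

context marked_net
begin

definition a_child :: nat where "a_child = the_elem (children E a - {r})"
definition b_child :: nat where "b_child = the_elem (children E b - {r})"

lemma children_other_parent:
  assumes "u \<in> V" "u \<noteq> r" "(u, r) \<in> E"
  shows "children E u = {r, the_elem (children E u - {r})} \<and> the_elem (children E u - {r}) \<noteq> r"
proof -
  have "r \<in> children E u"
    using assms(3) unfolding children_def by simp
  then obtain s where "s \<noteq> r" "children E u = {r, s}"
    using member_two_children children_tree[OF assms(1,2)] by metis
  moreover have "children E u - {r} = {s}"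
    using calculation by auto
  ultimately show ?thesis
    by simp
qed

lemma children_a: "children E a = {r, a_child}" and a_child_ne_r: "a_child \<noteq> r"
  using children_other_parent[OF a_in a_ne_r a_r_edge] unfolding a_child_def by auto

lemma children_b: "children E b = {r, b_child}" and b_child_ne_r: "b_child \<noteq> r"
  using children_other_parent[OF b_in b_ne_r b_r_edge] unfolding b_child_def by auto

lemma a_child_edge: "(a, a_child) \<in> E" and b_child_edge: "(b, b_child) \<in> E"
  using children_a children_b unfolding children_def by auto

lemma a_child_in: "a_child \<in> V" and b_child_in: "b_child \<in> V"
  using a_child_edge b_child_edge edges by auto

lemma parents_a_child: "parents E a_child = {a}" and parents_b_child: "parents E b_child = {b}"
  and parents_c: "parents E c = {r}"
  using parents_eq a_child_edge b_child_edge r_c_edge a_child_ne_r b_child_ne_r c_ne_r by auto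

lemma edge_a_iff: "v \<noteq> r \<Longrightarrow> (a, v) \<in> E \<longleftrightarrow> v = a_child"
  and edge_b_iff: "v \<noteq> r \<Longrightarrow> (b, v) \<in> E \<longleftrightarrow> v = b_child"
  and edge_r_iff: "(r, v) \<in> E \<longleftrightarrow> v = c"
  using children_a children_b children_r unfolding children_def by auto

lemma special_children_distinct:
  "a_child \<noteq> b_child" "a_child \<noteq> c" "b_child \<noteq> c"
  "a_child \<noteq> \<rho>" "b_child \<noteq> \<rho>" "a_child \<noteq> a" "b_child \<noteq> b" "a_child \<noteq> b" "b_child \<noteq> a"
  using parents_a_child parents_b_child parents_c parents_root a_ne_b a_ne_r b_ne_r
    rank[OF a_child_edge] rank[OF b_child_edge] no_path_ab no_path_ba a_child_edge b_child_edge
  by auto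

context
  fixes x y v :: nat
  assumes x_new: "x \<notin> V" and y_new: "y \<notin> V" and x_ne_y: "x \<noteq> y"
    and v_in: "v \<in> V" and v_ne_r: "v \<noteq> r"
begin

lemmas graft_facts = parents_graft_old[OF edges x_new y_new x_ne_y, where v = v]
  parents_graft_target[OF edges x_new y_new x_ne_y v_in]
  parents_graft_new_parent[OF edges x_new y_new x_ne_y v_in]
  parents_graft_new_leaf[OF edges x_new y_new x_ne_y v_in]
  children_graft_new_parent[OF edges x_new y_new x_ne_y, where v = v]
  children_graft_new_leaf[OF edges x_new y_new x_ne_y, where v = v]

lemma children_graft: "u \<in> V \<Longrightarrow> children (graft E x y v) u = (\<lambda>w. if w = v then y else w) ` children E u"
  by (rule children_graft_old[OF edges x_new y_new x_ne_y])

lemma graft_rank: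
  assumes "(u, w) \<in> graft E x y v"
  shows "(if u = y then 2 * h v + 1 else if u = x then 2 * h v + 2 else 2 * h u + 2)
    < (if w = y then 2 * h v + 1 else if w = x then 2 * h v + 2 else 2 * h w + 2)"
proof -
  have "(u, w) \<in> E \<and> w \<noteq> v \<or> (w = y \<and> (u, v) \<in> E) \<or> (u = y \<and> w = v) \<or> (u = y \<and> w = x)"
    using assms unfolding graft_def by auto
  moreover have "u \<in> V \<and> w \<in> V" if "(u, w) \<in> E" for u w
    using that edges by auto
  ultimately show ?thesis
    using rank x_new y_new x_ne_y v_in by fastforce
qed

lemma graft_root:
  shows "parents (graft E x y v) (if v = \<rho> then y else \<rho>) = {}"
    and "children (graft E x y v) (if v = \<rho> then y else \<rho>) \<noteq> {}"
    and "\<And>u. u \<in> insert x (insert y V) \<Longrightarrow> parents (graft E x y v) u = {} \<Longrightarrow>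
      u = (if v = \<rho> then y else \<rho>)"
proof -
  show "parents (graft E x y v) (if v = \<rho> then y else \<rho>) = {}"
    using graft_facts root_in parents_root by auto
  show "children (graft E x y v) (if v = \<rho> then y else \<rho>) \<noteq> {}"
    using graft_facts children_graft[OF root_in] children_root by auto
  fix u
  assume u: "u \<in> insert x (insert y V)" and no_parent: "parents (graft E x y v) u = {}"
  consider "u = x" | "u = y" | "u = v" | "u \<in> V" "u \<noteq> v"
    using u by blast
  then show "u = (if v = \<rho> then y else \<rho>)"
    by cases (use no_parent graft_facts root_unique v_in in auto)
qed

lemma graft_children_tree:
  assumes "u \<in> insert x (insert y V)" and "u \<noteq> r"
  shows "children (graft E x y v) u = {} \<or> (\<exists>c d. c \<noteq> d \<and> children (graft E x y v) u = {c, d})"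
proof -
  have "inj_on (\<lambda>w. if w = v then y else w) (children E u)"
    using edges y_new unfolding children_def by (auto intro!: inj_onI split: if_splits)
  note image = tree_children_image[OF this children_tree]
  consider "u = x" | "u = y" | "u \<in> V"
    using assms(1) by blast
  then show ?thesis
  proof cases
    case 3
    then show ?thesis
      using image[OF 3 assms(2)] children_graft[OF 3] by simp
  next
    case 2
    have "v \<noteq> x"
      using v_in x_new by blast
    then show ?thesis
      using 2 graft_facts by blast
  qed (use graft_facts in simp)
qed

theorem graft_marked_net:
  "marked_net (insert x (insert y V)) (graft E x y v) a (if v = \<rho> then y else \<rho>) r b
     (if c = v then y else c)
     (\<lambda>u. if u = y then 2 * h v + 1 else if u = x then 2 * h v + 2 else 2 * h u + 2)"
proof
  show "parents (graft E x y v) r = {a, b}"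
    using graft_facts r_in v_ne_r parents_r by auto
  show "children (graft E x y v) r = {if c = v then y else c}"
    using children_graft[OF r_in] children_r by simp
  show "(a, b) \<notin> (graft E x y v)\<^sup>+"
    using graft_trancl_old[OF edges x_new y_new x_ne_y v_in _ a_in b_in a_ne_b] no_path_ab by blast
  show "(b, a) \<notin> (graft E x y v)\<^sup>+"
    using graft_trancl_old[OF edges x_new y_new x_ne_y v_in _ b_in a_in] a_ne_b no_path_ba by blast
  show "parents (graft E x y v) u = {} \<or> (\<exists>p. parents (graft E x y v) u = {p})"
    if u: "u \<in> insert x (insert y V)" and "u \<noteq> r" for u
  proof -
    consider "u = x" | "u = y" | "u = v" | "u \<in> V" "u \<noteq> v"
      using u by blast
    then show ?thesis
      by cases (use \<open>u \<noteq> r\<close> graft_facts parents_tree v_in v_ne_r in simp_all)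
  qed
  show "(if v = \<rho> then y else \<rho>) \<in> insert x (insert y V)"
    using root_in by simp
qed (use finite_V graft_edges[OF edges x_new y_new x_ne_y v_in] graft_rank graft_root
    a_ne_b graft_children_tree in simp_all)

end

end

definition prunable :: "(nat \<times> nat) set \<Rightarrow> nat \<Rightarrow> nat \<Rightarrow> nat \<Rightarrow> bool" where
  "prunable E x y z \<longleftrightarrow> x \<noteq> z \<and> children E x = {} \<and> parents E x = {y} \<and> parents E z = {y}
     \<and> children E y = {x, z}"

lemma prunable_graft:
  "E \<subseteq> V \<times> V \<Longrightarrow> x \<notin> V \<Longrightarrow> y \<notin> V \<Longrightarrow> x \<noteq> y \<Longrightarrow> v \<in> V \<Longrightarrow> prunable (graft E x y v) x y v"
proof -
  assume facts: "E \<subseteq> V \<times> V" "x \<notin> V" "y \<notin> V" "x \<noteq> y" "v \<in> V"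
  then have "x \<noteq> v"
    by blast
  then show ?thesis
    unfolding prunable_def
    using children_graft_new_leaf[OF facts(1-4)] parents_graft_new_leaf[OF facts]
      parents_graft_target[OF facts] children_graft_new_parent[OF facts(1-4)]
    by (simp add: insert_commute)
qed

context marked_net
begin

context
  fixes x y z :: nat
  assumes prunable: "prunable E x y z"
begin

lemma prunable_edges: "(y, x) \<in> E" "(y, z) \<in> E"
  and prunable_parents: "\<And>u. (u, x) \<in> E \<longleftrightarrow> u = y" "\<And>u. (u, z) \<in> E \<longleftrightarrow> u = y"
  and prunable_leaf: "\<And>u. (x, u) \<notin> E"
  and prunable_children: "\<And>w. (y, w) \<in> E \<longleftrightarrow> w = x \<or> w = z"
  using prunable unfolding prunable_def parents_def children_def by auto

lemma prunable_in: "x \<in> V" "y \<in> V" "z \<in> V"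
  using prunable_edges edges by auto

lemma prunable_distinct: "x \<noteq> y" "y \<noteq> z" "x \<noteq> z" "x \<noteq> r" "y \<noteq> r" "z \<noteq> r"
proof -
  show "x \<noteq> y" "y \<noteq> z"
    using rank[OF prunable_edges(1)] rank[OF prunable_edges(2)] by auto
  show "x \<noteq> z"
    using prunable unfolding prunable_def by simp
  show "x \<noteq> r"
    using prunable children_r unfolding prunable_def by auto
  show "y \<noteq> r"
    using prunable children_r unfolding prunable_def by (auto simp: doubleton_eq_iff)
  show "z \<noteq> r"
    using prunable parents_r a_ne_b unfolding prunable_def by (auto simp: doubleton_eq_iff)
qed

lemma parents_prune_old: "u \<notin> {x, y, z} \<Longrightarrow> parents (prune E x y z) u = parents E u"
  using prunable_leaf prunable_children unfolding parents_def prune_def by auto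

lemma parents_prune_sibling: "parents (prune E x y z) z = parents E y"
  using prunable_parents prunable_distinct unfolding parents_def prune_def by auto

lemma children_prune: "u \<notin> {x, y} \<Longrightarrow>
  children (prune E x y z) u = (\<lambda>w. if w = y then z else w) ` children E u"
  using prunable_parents unfolding children_def prune_def by (auto simp: image_iff)

lemma graft_prune: "graft (prune E x y z) x y z = E"
  using prunable_edges prunable_parents prunable_leaf prunable_children prunable_distinct
  unfolding graft_def prune_def by auto

lemma prune_edge_cases:
  "(u, w) \<in> prune E x y z \<Longrightarrow> (u, w) \<in> E \<and> u \<notin> {x, y} \<and> w \<notin> {x, y} \<or> w = z \<and> (u, y) \<in> E"
  unfolding prune_def by auto

lemma prune_edge_in:
  assumes "(u, w) \<in> prune E x y z"
  shows "u \<in> V - {x, y}" "w \<in> V - {x, y}"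
proof -
  have "u \<noteq> x \<and> u \<noteq> y" if "(u, y) \<in> E"
    using that rank[OF that] prunable_leaf by auto
  then show "u \<in> V - {x, y}" "w \<in> V - {x, y}"
    using prune_edge_cases[OF assms] edges prunable_in prunable_distinct by auto
qed

lemma prune_edges: "prune E x y z \<subseteq> (V - {x, y}) \<times> (V - {x, y})"
  using prune_edge_in by auto

lemma prune_rank: "(u, w) \<in> prune E x y z \<Longrightarrow> h u < h w"
proof -
  assume "(u, w) \<in> prune E x y z"
  then consider "(u, w) \<in> E" | "w = z" "(u, y) \<in> E"
    using prune_edge_cases by blast
  then show "h u < h w"
    by cases (use rank rank[OF prunable_edges(2)] in force)+
qed

lemma root_prune_in: "(if y = \<rho> then z else \<rho>) \<in> V - {x, y}"
  using prunable_in prunable_distinct prunable_parents parents_root root_in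
  unfolding parents_def by auto

text \<open>If \<open>y\<close> is the root, \<open>z\<close> becomes the root; it is not a leaf, as the path from the root
  to \<open>r\<close> cannot pass through the leaf \<open>x\<close>.\<close>

lemma children_prune_root: "children (prune E x y z) (if y = \<rho> then z else \<rho>) \<noteq> {}"
proof (cases "y = \<rho>")
  case True
  have "(\<rho>, r) \<in> E\<^sup>+"
    using reachable_from_root[OF r_in] r_ne_root by (simp add: rtrancl_eq_or_trancl)
  then obtain q where q: "(\<rho>, q) \<in> E" "(q, r) \<in> E\<^sup>*"
    by (meson tranclD)
  moreover have "q \<noteq> x"
    using q(2) prunable_leaf prunable_distinct by (auto elim: converse_rtranclE)
  ultimately have "q = z"
    using True prunable_children by blast
  then obtain w where "(z, w) \<in> E"
    using q(2) prunable_distinct by (auto elim: converse_rtranclE)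
  then show ?thesis
    using True children_prune[of z] prunable_distinct prunable_in unfolding children_def by auto
next
  case False
  have "\<rho> \<noteq> x"
    using prunable_parents parents_root unfolding parents_def by auto
  then show ?thesis
    using False children_prune[of \<rho>] children_root by auto
qed

lemma prune_children_tree:
  assumes "u \<in> V - {x, y}" and "u \<noteq> r"
  shows "children (prune E x y z) u = {} \<or> (\<exists>c d. c \<noteq> d \<and> children (prune E x y z) u = {c, d})"
proof -
  have "(u, z) \<notin> E"
    using assms prunable_parents by auto
  then have "inj_on (\<lambda>w. if w = y then z else w) (children E u)"
    unfolding children_def inj_on_def by auto
  then have "(\<lambda>w. if w = y then z else w) ` children E u = {} \<or>
    (\<exists>c d. c \<noteq> d \<and> (\<lambda>w. if w = y then z else w) ` children E u = {c, d})"
    by (rule tree_children_image[OF _ children_tree]) (use assms in auto)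
  moreover have "children (prune E x y z) u = (\<lambda>w. if w = y then z else w) ` children E u"
    using assms by (intro children_prune) simp
  ultimately show ?thesis
    by (simp only:)
qed

theorem prune_marked_net:
  "marked_net (V - {x, y}) (prune E x y z) a (if y = \<rho> then z else \<rho>) r b (if c = y then z else c) h"
proof
  have "\<rho> \<notin> {x, z}"
    using prunable_parents parents_root unfolding parents_def by auto
  then show "parents (prune E x y z) (if y = \<rho> then z else \<rho>) = {}"
    using parents_prune_old parents_prune_sibling parents_root by auto
  show "u = (if y = \<rho> then z else \<rho>)"
    if "u \<in> V - {x, y}" and "parents (prune E x y z) u = {}" for u
    using that root_unique parents_prune_old parents_prune_sibling prunable_in
    by (cases "u = z") auto
  show "parents (prune E x y z) r = {a, b}"
    using parents_prune_old prunable_distinct parents_r by simp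
  show "children (prune E x y z) r = {if c = y then z else c}"
    using children_prune prunable_distinct children_r by simp
  show "(a, b) \<notin> (prune E x y z)\<^sup>+" "(b, a) \<notin> (prune E x y z)\<^sup>+"
    using prune_trancl[OF prunable_edges(2)] no_path_ab no_path_ba by blast+
  show "parents (prune E x y z) u = {} \<or> (\<exists>p. parents (prune E x y z) u = {p})"
    if "u \<in> V - {x, y}" and "u \<noteq> r" for u
    using that parents_tree parents_prune_old parents_prune_sibling prunable_in prunable_distinct
    by (cases "u = z") auto
qed (use finite_V prune_edges prune_rank root_prune_in children_prune_root a_ne_b
    prune_children_tree in simp_all)

end

end

lemma indeg_eq_card_parents: "indeg E v = card (parents E v)"
  unfolding indeg_def parents_def by simp

lemma outdeg_eq_card_children: "outdeg E v = card (children E v)"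
  unfolding outdeg_def children_def by simp

lemma (in marked_net) is_reticulation_iff: "v \<in> V \<Longrightarrow> is_reticulation E v \<longleftrightarrow> v = r"
proof
  assume "v \<in> V" and "is_reticulation E v"
  then obtain u u' where "u \<noteq> u'" "parents E v = {u, u'}"
    unfolding is_reticulation_def indeg_eq_card_parents by (meson card_2_iff)
  then show "v = r"
    using two_parents_reticulation unfolding parents_def by blast
next
  assume "v = r"
  then show "is_reticulation E v"
    unfolding is_reticulation_def indeg_eq_card_parents outdeg_eq_card_children
    using parents_r children_r a_ne_b by simp
qed

text \<open>The three flags record whether the other child of \<open>a\<close>, the other child of \<open>b\<close> and
  the child of \<open>r\<close> are leaves; they are stated without reference to \<open>r\<close> and \<open>b\<close>, which
  are determined by \<open>E\<close> and \<open>a\<close>.\<close>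

definition a_child_leaf :: "(nat \<times> nat) set \<Rightarrow> nat \<Rightarrow> bool" where
  "a_child_leaf E a \<longleftrightarrow>
     (\<forall>r b. a \<noteq> b \<longrightarrow> parents E r = {a, b} \<longrightarrow> (\<forall>w. (a, w) \<in> E \<longrightarrow> w \<noteq> r \<longrightarrow> children E w = {}))"

definition b_child_leaf :: "(nat \<times> nat) set \<Rightarrow> nat \<Rightarrow> bool" where
  "b_child_leaf E a \<longleftrightarrow>
     (\<forall>r b. a \<noteq> b \<longrightarrow> parents E r = {a, b} \<longrightarrow> (\<forall>w. (b, w) \<in> E \<longrightarrow> w \<noteq> r \<longrightarrow> children E w = {}))"

definition r_child_leaf :: "(nat \<times> nat) set \<Rightarrow> nat \<Rightarrow> bool" where
  "r_child_leaf E a \<longleftrightarrow>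
     (\<forall>r b. a \<noteq> b \<longrightarrow> parents E r = {a, b} \<longrightarrow> (\<forall>w. (r, w) \<in> E \<longrightarrow> children E w = {}))"

definition leaf_flags :: "(nat \<times> nat) set \<Rightarrow> nat \<Rightarrow> bool \<times> bool \<times> bool" where
  "leaf_flags E a = (a_child_leaf E a, b_child_leaf E a, r_child_leaf E a)"

lemma (in marked_net) leaf_flags_eq:
  "leaf_flags E a = (children E a_child = {}, children E b_child = {}, children E c = {})"
proof -
  have reticulation: "(\<forall>r' b'. a \<noteq> b' \<longrightarrow> parents E r' = {a, b'} \<longrightarrow> P r' b') \<longleftrightarrow> P r b"
    for P :: "nat \<Rightarrow> nat \<Rightarrow> bool"
  proof
    show "P r b" if "\<forall>r' b'. a \<noteq> b' \<longrightarrow> parents E r' = {a, b'} \<longrightarrow> P r' b'"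
      using that a_ne_b parents_r by simp
    show "\<forall>r' b'. a \<noteq> b' \<longrightarrow> parents E r' = {a, b'} \<longrightarrow> P r' b'" if "P r b"
      using that reticulation_parents_unique by auto
  qed
  show ?thesis
    unfolding leaf_flags_def a_child_leaf_def b_child_leaf_def r_child_leaf_def reticulation
    using edge_a_iff edge_b_iff edge_r_iff a_child_ne_r b_child_ne_r by auto
qed

text \<open>Grafting above \<open>v\<close> makes the inner vertex \<open>y\<close> the child in place of \<open>v\<close>.\<close>

lemma (in marked_net) leaf_flags_graft:
  assumes x_new: "x \<notin> V" and y_new: "y \<notin> V" and x_ne_y: "x \<noteq> y" and v_in: "v \<in> V"
    and v_ne_r: "v \<noteq> r"
  shows "leaf_flags (graft E x y v) a = (children E a_child = {} \<and> v \<noteq> a_child,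
    children E b_child = {} \<and> v \<noteq> b_child, children E c = {} \<and> v \<noteq> c)"
proof -
  let ?f = "\<lambda>w. if w = v then y else w"
  interpret G: marked_net "insert x (insert y V)" "graft E x y v" a "if v = \<rho> then y else \<rho>" r b
    "?f c" "\<lambda>u. if u = y then 2 * h v + 1 else if u = x then 2 * h v + 2 else 2 * h u + 2"
    by (rule graft_marked_net[OF assms])
  have children_f: "children (graft E x y v) (?f w) = {} \<longleftrightarrow> children E w = {} \<and> w \<noteq> v"
    if "w \<in> V" for w
    using that children_graft[OF assms that] children_graft_new_parent[OF edges x_new y_new x_ne_y]
    by auto
  have "children (graft E x y v) a = {r, ?f a_child}"
    using children_graft[OF assms a_in] children_a v_ne_r by simp
  then have "G.a_child = ?f a_child"
    using G.children_a G.a_child_ne_r by (auto simp: doubleton_eq_iff)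
  moreover have "children (graft E x y v) b = {r, ?f b_child}"
    using children_graft[OF assms b_in] children_b v_ne_r by simp
  then have "G.b_child = ?f b_child"
    using G.children_b G.b_child_ne_r by (auto simp: doubleton_eq_iff)
  ultimately show ?thesis
    using G.leaf_flags_eq children_f a_child_in b_child_in c_in by auto
qed

definition flag_weight :: "bool \<times> bool \<times> bool \<Rightarrow> nat" where
  "flag_weight g = (case g of (g1, g2, g3) \<Rightarrow> of_bool g1 + of_bool g2 + of_bool g3)"

text \<open>The number of ways to choose one of \<open>n\<close> positions so that clearing the flag at the
  chosen position (if it is one of the three flagged positions) turns \<open>g\<close> into \<open>f\<close>.\<close>

definition flag_moves :: "bool \<times> bool \<times> bool \<Rightarrow> bool \<times> bool \<times> bool \<Rightarrow> nat \<Rightarrow> nat" where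
  "flag_moves g f n = (case g of (g1, g2, g3) \<Rightarrow> if f = g then n - flag_weight g else
     if (g1 \<and> f = (False, g2, g3)) \<or> (g2 \<and> f = (g1, False, g3)) \<or> (g3 \<and> f = (g1, g2, False))
     then 1 else 0)"

lemma card_flag_moves:
  assumes "finite S" "p1 \<in> S" "p2 \<in> S" "p3 \<in> S" "p1 \<noteq> p2" "p1 \<noteq> p3" "p2 \<noteq> p3"
  shows "card {v \<in> S. (g1 \<and> v \<noteq> p1, g2 \<and> v \<noteq> p2, g3 \<and> v \<noteq> p3) = f} = flag_moves (g1, g2, g3) f (card S)"
proof -
  let ?T = "{v \<in> S. (g1 \<and> v \<noteq> p1, g2 \<and> v \<noteq> p2, g3 \<and> v \<noteq> p3) = f}"
  let ?P = "(if g1 then {p1} else {}) \<union> (if g2 then {p2} else {}) \<union> (if g3 then {p3} else {})"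
  consider "f = (g1, g2, g3)"
    | "(g1 \<and> f = (False, g2, g3)) \<or> (g2 \<and> f = (g1, False, g3)) \<or> (g3 \<and> f = (g1, g2, False))"
    | "f \<noteq> (g1, g2, g3)"
      "\<not> ((g1 \<and> f = (False, g2, g3)) \<or> (g2 \<and> f = (g1, False, g3)) \<or> (g3 \<and> f = (g1, g2, False)))"
    by blast
  then show ?thesis
  proof cases
    case 1
    have "?T = S - ?P" and "?P \<subseteq> S"
      using 1 assms by auto
    moreover have "card ?P = flag_weight (g1, g2, g3)"
      unfolding flag_weight_def using assms by (cases g1; cases g2; cases g3) auto
    ultimately show ?thesis
      using 1 card_Diff_subset[of ?P S] finite_subset[of ?P S] assms(1) unfolding flag_moves_def by simp
  next
    case 2
    then have "?T = {p1} \<or> ?T = {p2} \<or> ?T = {p3}"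
      using assms by (elim disjE) auto
    then have "card ?T = 1"
      by auto
    moreover have "f \<noteq> (g1, g2, g3)"
      using 2 by auto
    ultimately show ?thesis
      using 2 unfolding flag_moves_def by simp
  next
    case 3
    then have "card ?T = 0"
      using assms by auto
    then show ?thesis
      using 3 unfolding flag_moves_def by simp
  qed
qed

lemma (in marked_net) card_graft_positions:
  assumes "x \<notin> V" and "y \<notin> V" and "x \<noteq> y"
  shows "card {v \<in> V. \<not> is_reticulation E v \<and> leaf_flags (graft E x y v) a = f}
    = flag_moves (leaf_flags E a) f (card V - 1)"
proof -
  have "{v \<in> V. \<not> is_reticulation E v \<and> leaf_flags (graft E x y v) a = f} =
    {v \<in> V - {r}. (children E a_child = {} \<and> v \<noteq> a_child, children E b_child = {} \<and> v \<noteq> b_child,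
       children E c = {} \<and> v \<noteq> c) = f}"
    using leaf_flags_graft[OF assms] is_reticulation_iff by auto
  also have "card \<dots> = flag_moves (leaf_flags E a) f (card (V - {r}))"
    unfolding leaf_flags_eq
    by (rule card_flag_moves)
      (use finite_V a_child_in b_child_in c_in a_child_ne_r b_child_ne_r c_ne_r
        special_children_distinct in auto)
  finally show ?thesis
    using finite_V r_in by simp
qed

lemma card_edges_children:
  assumes "finite V" and "E \<subseteq> V \<times> V"
  shows "card E = (\<Sum>v\<in>V. card (children E v))"
proof -
  have "E = Sigma V (children E)"
    using assms(2) unfolding children_def by auto
  moreover have "\<forall>v\<in>V. finite (children E v)"
    using assms unfolding children_def by (auto intro: finite_subset[of _ V])
  ultimately show ?thesis
    using card_SigmaI assms(1) by metis
qed

lemma card_edges_parents: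
  assumes "finite V" and "E \<subseteq> V \<times> V"
  shows "card E = (\<Sum>v\<in>V. card (parents E v))"
proof -
  have "E\<inverse> = Sigma V (parents E)"
    using assms(2) unfolding parents_def by auto
  moreover have "\<forall>v\<in>V. finite (parents E v)"
    using assms unfolding parents_def by (auto intro: finite_subset[of _ V])
  ultimately show ?thesis
    using card_SigmaI assms(1) card_inverse by metis
qed

context marked_net
begin

definition inner_tree_verts :: "nat set" where
  "inner_tree_verts = {v \<in> V - {r}. children E v \<noteq> {}}"

definition leaves :: "nat set" where
  "leaves = {v \<in> V. children E v = {}}"

lemma card_children_tree: "v \<in> V - {r} \<Longrightarrow> card (children E v) = (if children E v = {} then 0 else 2)"
  using children_tree by fastforce

lemma card_parents_tree: "v \<in> V - {\<rho>, r} \<Longrightarrow> card (parents E v) = 1"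
  using parents_singleton by fastforce

lemma card_E_parents: "card E = card V"
proof -
  have "card E = (\<Sum>v\<in>V - {\<rho>, r}. card (parents E v)) + (\<Sum>v\<in>{\<rho>, r}. card (parents E v))"
    using card_edges_parents[OF finite_V edges] finite_V root_in r_in
    by (metis sum.subset_diff empty_subsetI insert_subset)
  also have "\<dots> = card (V - {\<rho>, r}) + 2"
    using card_parents_tree r_ne_root parents_root parents_r a_ne_b by simp
  moreover have "card {\<rho>, r} \<le> card V"
    using finite_V root_in r_in by (intro card_mono) auto
  ultimately show ?thesis
    using finite_V root_in r_in r_ne_root by (simp add: card_Diff_subset)
qed

lemma card_E_children: "card E = 1 + 2 * card inner_tree_verts"
proof -
  have "card E = (\<Sum>v\<in>V - {r}. card (children E v)) + card (children E r)"
    using card_edges_children[OF finite_V edges] finite_V r_in by (simp add: sum.remove)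
  also have "(\<Sum>v\<in>V - {r}. card (children E v)) = (\<Sum>v\<in>V - {r}. if children E v \<noteq> {} then 2 else 0)"
    using card_children_tree by (intro sum.cong) auto
  also have "\<dots> = (\<Sum>v\<in>inner_tree_verts. 2)"
    unfolding inner_tree_verts_def by (rule sum.inter_filter[symmetric]) (use finite_V in simp)
  finally show ?thesis
    using children_r by simp
qed

lemma card_inner_tree_verts: "card V = 1 + 2 * card inner_tree_verts"
  using card_E_parents card_E_children by simp

lemma odd_card_V: "odd (card V)"
  using card_inner_tree_verts by simp

lemma card_leaves: "card leaves = (card V - 1) div 2"
proof -
  have split: "V - {r} = inner_tree_verts \<union> leaves"
    using r_in children_r unfolding inner_tree_verts_def leaves_def by auto
  have "card (V - {r}) = card inner_tree_verts + card leaves"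
    unfolding split
    by (rule card_Un_disjoint) (use finite_V in \<open>auto simp: inner_tree_verts_def leaves_def\<close>)
  then have "card V - 1 = card inner_tree_verts + card leaves"
    using finite_V r_in by simp
  then show ?thesis
    using card_inner_tree_verts by simp
qed

lemma prunable_iff_leaf: "(\<exists>y z. prunable E x y z) \<longleftrightarrow> x \<in> leaves - {a_child, b_child, c}"
proof
  assume "\<exists>y z. prunable E x y z"
  then obtain y z where x: "prunable E x y z"
    by blast
  have "x \<noteq> a_child \<and> x \<noteq> b_child"
    using x parents_a_child parents_b_child children_a children_b prunable_distinct[OF x]
    unfolding prunable_def by (auto simp: doubleton_eq_iff)
  moreover have "x \<noteq> c"
    using x parents_c prunable_distinct[OF x] unfolding prunable_def by auto
  ultimately show "x \<in> leaves - {a_child, b_child, c}"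
    using x prunable_in[OF x] unfolding prunable_def leaves_def by auto
next
  assume x: "x \<in> leaves - {a_child, b_child, c}"
  then have x_in: "x \<in> V" and x_leaf: "children E x = {}"
    unfolding leaves_def by auto
  obtain y where y: "parents E x = {y}"
    using parents_singleton[OF x_in] x_leaf children_root children_r by fastforce
  then have yx: "(y, x) \<in> E"
    unfolding parents_def by auto
  have y_ne_r: "y \<noteq> r"
    using yx x edge_r_iff by auto
  have "y \<in> V" "x \<in> children E y"
    using yx edges unfolding children_def by auto
  then obtain z where z: "z \<noteq> x" "children E y = {x, z}"
    using member_two_children children_tree y_ne_r by metis
  then have yz: "(y, z) \<in> E"
    unfolding children_def by auto
  have "z \<noteq> r"
  proof
    assume "z = r"
    then have "children E y = {r, x}" and "y = a \<or> y = b"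
      using z yz parent_r_iff by auto
    then show False
      using x children_a children_b z(1) by (auto simp: doubleton_eq_iff)
  qed
  then have "prunable E x y z"
    using z x_leaf y parents_eq[OF yz] unfolding prunable_def by simp
  then show "\<exists>y z. prunable E x y z"
    by blast
qed

lemma card_special_leaves: "card (leaves \<inter> {a_child, b_child, c}) = flag_weight (leaf_flags E a)"
proof -
  have "leaves \<inter> {a_child, b_child, c} = (if children E a_child = {} then {a_child} else {}) \<union>
    (if children E b_child = {} then {b_child} else {}) \<union> (if children E c = {} then {c} else {})"
    using a_child_in b_child_in c_in unfolding leaves_def by auto
  then show ?thesis
    unfolding leaf_flags_eq flag_weight_def using special_children_distinct by auto
qed

lemma card_prunable: "card {x. \<exists>y z. prunable E x y z} = (card V - 1) div 2 - flag_weight (leaf_flags E a)"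
proof -
  have "card {x. \<exists>y z. prunable E x y z} = card leaves - card (leaves \<inter> {a_child, b_child, c})"
    unfolding prunable_iff_leaf Collect_mem_eq by (rule card_Diff_subset_Int) simp
  then show ?thesis
    using card_leaves card_special_leaves by simp
qed

end

section \<open>The pruning bijection\<close>

definition marked_nets :: "nat set \<Rightarrow> ((nat \<times> nat) set \<times> nat) set" where
  "marked_nets W = {(E, a). is_marked_net W E a}"

definition flagged_nets :: "nat set \<Rightarrow> bool \<times> bool \<times> bool \<Rightarrow> ((nat \<times> nat) set \<times> nat) set" where
  "flagged_nets W f = {(E, a). is_marked_net W E a \<and> leaf_flags E a = f}"

definition parent_of :: "(nat \<times> nat) set \<Rightarrow> nat \<Rightarrow> nat" where
  "parent_of E x = the_elem (parents E x)"

definition sibling_of :: "(nat \<times> nat) set \<Rightarrow> nat \<Rightarrow> nat" where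
  "sibling_of E x = the_elem (children E (parent_of E x) - {x})"

definition prunings :: "nat set \<Rightarrow> bool \<times> bool \<times> bool \<Rightarrow> (((nat \<times> nat) set \<times> nat) \<times> nat) set" where
  "prunings W f = Sigma (flagged_nets W f) (\<lambda>(E, a). {x. \<exists>y z. prunable E x y z})"

definition grafts ::
  "nat set \<Rightarrow> bool \<times> bool \<times> bool \<Rightarrow> (nat \<times> nat \<times> ((nat \<times> nat) set \<times> nat) \<times> nat) set" where
  "grafts W f = (SIGMA x:W. SIGMA y:W - {x}. SIGMA N:marked_nets (W - {x, y}).
     {v \<in> W - {x, y}. \<not> is_reticulation (fst N) v \<and> leaf_flags (graft (fst N) x y v) (snd N) = f})"

definition prune_map ::
  "((nat \<times> nat) set \<times> nat) \<times> nat \<Rightarrow> nat \<times> nat \<times> ((nat \<times> nat) set \<times> nat) \<times> nat" where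
  "prune_map = (\<lambda>((E, a), x). (x, parent_of E x, (prune E x (parent_of E x) (sibling_of E x), a),
     sibling_of E x))"

definition graft_map ::
  "nat \<times> nat \<times> ((nat \<times> nat) set \<times> nat) \<times> nat \<Rightarrow> ((nat \<times> nat) set \<times> nat) \<times> nat" where
  "graft_map = (\<lambda>(x, y, (E, a), v). ((graft E x y v, a), x))"

lemma prunable_parent_of_sibling_of:
  assumes "prunable E x y z"
  shows "parent_of E x = y" and "sibling_of E x = z"
proof -
  show "parent_of E x = y"
    using assms unfolding prunable_def parent_of_def by simp
  moreover have "children E y - {x} = {z}"
    using assms unfolding prunable_def by auto
  ultimately show "sibling_of E x = z"
    unfolding sibling_of_def by simp
qed

lemma marked_nets_subset: "marked_nets W \<subseteq> Pow (W \<times> W) \<times> W"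
proof
  fix N
  assume "N \<in> marked_nets W"
  then obtain E a where N: "N = (E, a)" "is_marked_net W E a"
    unfolding marked_nets_def by auto
  obtain \<rho> r b c h where "marked_net W E a \<rho> r b c h"
    using N(2) by (rule is_marked_netE)
  then interpret marked_net W E a \<rho> r b c h .
  show "N \<in> Pow (W \<times> W) \<times> W"
    using N edges a_in by auto
qed

lemma finite_marked_nets: "finite W \<Longrightarrow> finite (marked_nets W)"
  using marked_nets_subset by (rule finite_subset) auto

lemma finite_flagged_nets: "finite W \<Longrightarrow> finite (flagged_nets W f)"
  by (rule finite_subset[OF _ finite_marked_nets]) (auto simp: flagged_nets_def marked_nets_def)

lemma prune_map_in_grafts:
  assumes "t \<in> prunings W f"
  shows "prune_map t \<in> grafts W f" and "graft_map (prune_map t) = t"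
proof -
  obtain E a x y z where t: "t = ((E, a), x)" "is_marked_net W E a" "leaf_flags E a = f"
    "prunable E x y z"
    using assms unfolding prunings_def flagged_nets_def by auto
  then obtain \<rho> r b c h where "marked_net W E a \<rho> r b c h"
    by (meson is_marked_netE)
  then interpret marked_net W E a \<rho> r b c h .
  interpret P: marked_net "W - {x, y}" "prune E x y z" a "if y = \<rho> then z else \<rho>" r b
    "if c = y then z else c" h
    by (rule prune_marked_net[OF t(4)])
  have map: "prune_map t = (x, y, (prune E x y z, a), z)"
    using t prunable_parent_of_sibling_of[OF t(4)] unfolding prune_map_def by simp
  have "\<not> is_reticulation (prune E x y z) z"
    using P.is_reticulation_iff prune_edge_in prunable_edges(2) prunable_distinct[OF t(4)]
      prunable_in[OF t(4)] t(4) by auto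
  then show "prune_map t \<in> grafts W f"
    unfolding map grafts_def marked_nets_def
    using P.is_marked_net graft_prune[OF t(4)] t prunable_in[OF t(4)] prunable_distinct[OF t(4)]
    by auto
  show "graft_map (prune_map t) = t"
    using t graft_prune[OF t(4)] unfolding map graft_map_def by simp
qed

lemma graft_map_in_prunings:
  assumes "s \<in> grafts W f"
  shows "graft_map s \<in> prunings W f" and "prune_map (graft_map s) = s"
proof -
  obtain x y E a v where s: "s = (x, y, (E, a), v)" "x \<in> W" "y \<in> W - {x}"
    "is_marked_net (W - {x, y}) E a" "v \<in> W - {x, y}" "\<not> is_reticulation E v"
    "leaf_flags (graft E x y v) a = f"
    using assms unfolding grafts_def marked_nets_def by (cases s) fastforce
  then obtain \<rho> r b c h where "marked_net (W - {x, y}) E a \<rho> r b c h"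
    by (meson is_marked_netE)
  then interpret marked_net "W - {x, y}" E a \<rho> r b c h .
  have v_ne_r: "v \<noteq> r"
    using is_reticulation_iff s by auto
  interpret G: marked_net "insert x (insert y (W - {x, y}))" "graft E x y v" a
    "if v = \<rho> then y else \<rho>" r b "if c = v then y else c"
    "\<lambda>u. if u = y then 2 * h v + 1 else if u = x then 2 * h v + 2 else 2 * h u + 2"
    by (rule graft_marked_net) (use s v_ne_r in auto)
  have W: "insert x (insert y (W - {x, y})) = W"
    using s by auto
  have prunable: "prunable (graft E x y v) x y v"
    by (rule prunable_graft[OF edges]) (use s in auto)
  show "graft_map s \<in> prunings W f"
    using G.is_marked_net W s prunable unfolding graft_map_def prunings_def flagged_nets_def by auto
  show "prune_map (graft_map s) = s"
    using s prunable_parent_of_sibling_of[OF prunable] prune_graft[OF edges, of x y v]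
    unfolding prune_map_def graft_map_def by simp
qed

lemma bij_prune_map: "bij_betw prune_map (prunings W f) (grafts W f)"
  by (rule bij_betw_byWitness[where f' = graft_map])
    (use prune_map_in_grafts graft_map_in_prunings in blast)+

lemma card_prunings:
  assumes "finite W"
  shows "card (prunings W f) = card (flagged_nets W f) * ((card W - 1) div 2 - flag_weight f)"
proof -
  have count: "card {x. \<exists>y z. prunable E x y z} = (card W - 1) div 2 - flag_weight f"
    and finite: "finite {x. \<exists>y z. prunable E x y z}"
    if "(E, a) \<in> flagged_nets W f" for E a
  proof -
    have "is_marked_net W E a"
      using that by (simp add: flagged_nets_def)
    then obtain \<rho> r b c h where "marked_net W E a \<rho> r b c h"
      by (rule is_marked_netE)
    then interpret marked_net W E a \<rho> r b c h .
    show "card {x. \<exists>y z. prunable E x y z} = (card W - 1) div 2 - flag_weight f"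
      using card_prunable that unfolding flagged_nets_def by simp
    show "finite {x. \<exists>y z. prunable E x y z}"
      using prunable_in finite_V by (blast intro: finite_subset)
  qed
  have "card (prunings W f) = (\<Sum>N\<in>flagged_nets W f. card ((\<lambda>(E, a). {x. \<exists>y z. prunable E x y z}) N))"
    unfolding prunings_def using finite finite_flagged_nets[OF assms] by (intro card_SigmaI) auto
  also have "\<dots> = (\<Sum>N\<in>flagged_nets W f. (card W - 1) div 2 - flag_weight f)"
    using count by (intro sum.cong) auto
  finally show ?thesis
    by simp
qed

lemma sum_marked_nets_by_flags:
  assumes "finite W"
  shows "(\<Sum>N\<in>marked_nets W. F (leaf_flags (fst N) (snd N))) = (\<Sum>g\<in>UNIV. card (flagged_nets W g) * F g)"
proof -
  have "(\<Sum>N\<in>marked_nets W. F (leaf_flags (fst N) (snd N))) =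
     (\<Sum>g\<in>UNIV. \<Sum>N\<in>{N \<in> marked_nets W. leaf_flags (fst N) (snd N) = g}. F (leaf_flags (fst N) (snd N)))"
    by (rule sum.group[symmetric]) (use finite_marked_nets[OF assms] in auto)
  also have "\<dots> = (\<Sum>g\<in>UNIV. card (flagged_nets W g) * F g)"
  proof (rule sum.cong)
    fix g
    have "{N \<in> marked_nets W. leaf_flags (fst N) (snd N) = g} = flagged_nets W g"
      unfolding marked_nets_def flagged_nets_def by auto
    moreover have "(\<Sum>N\<in>flagged_nets W g. F (leaf_flags (fst N) (snd N))) = (\<Sum>N\<in>flagged_nets W g. F g)"
      by (rule sum.cong) (auto simp: flagged_nets_def)
    ultimately show "(\<Sum>N\<in>{N \<in> marked_nets W. leaf_flags (fst N) (snd N) = g}. F (leaf_flags (fst N) (snd N)))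
      = card (flagged_nets W g) * F g"
      by simp
  qed simp
  finally show ?thesis .
qed

lemma card_grafts:
  assumes "finite W"
  shows "card (grafts W f) =
    (\<Sum>x\<in>W. \<Sum>y\<in>W - {x}. \<Sum>g\<in>UNIV. card (flagged_nets (W - {x, y}) g) * flag_moves g f (card W - 3))"
proof -
  let ?S = "\<lambda>x y N. {v \<in> W - {x, y}. \<not> is_reticulation (fst N) v \<and> leaf_flags (graft (fst N) x y v) (snd N) = f}"
  have positions: "card (?S x y N) = flag_moves (leaf_flags (fst N) (snd N)) f (card W - 3)"
    if xy: "x \<in> W" "y \<in> W - {x}" and "N \<in> marked_nets (W - {x, y})" for x y N
  proof -
    obtain E a where N: "N = (E, a)" "is_marked_net (W - {x, y}) E a"
      using \<open>N \<in> marked_nets (W - {x, y})\<close> unfolding marked_nets_def by auto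
    obtain \<rho> r b c h where "marked_net (W - {x, y}) E a \<rho> r b c h"
      using N(2) by (rule is_marked_netE)
    then interpret marked_net "W - {x, y}" E a \<rho> r b c h .
    have "card (W - {x, y}) = card W - 2"
      using xy assms by (simp add: card_Diff_subset)
    then show ?thesis
      using card_graft_positions[of x y f] xy N by simp
  qed
  have "card (grafts W f) = (\<Sum>x\<in>W. \<Sum>y\<in>W - {x}. \<Sum>N\<in>marked_nets (W - {x, y}). card (?S x y N))"
    unfolding grafts_def using assms finite_marked_nets
    by (simp add: card_SigmaI sum_nonneg del: Diff_insert)
  also have "\<dots> = (\<Sum>x\<in>W. \<Sum>y\<in>W - {x}. \<Sum>N\<in>marked_nets (W - {x, y}).
      flag_moves (leaf_flags (fst N) (snd N)) f (card W - 3))"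
    using positions by (intro sum.cong) auto
  also have "\<dots> = (\<Sum>x\<in>W. \<Sum>y\<in>W - {x}. \<Sum>g\<in>UNIV. card (flagged_nets (W - {x, y}) g) * flag_moves g f (card W - 3))"
    using sum_marked_nets_by_flags[where F = "\<lambda>g. flag_moves g f (card W - 3)"] assms
    by (intro sum.cong) auto
  finally show ?thesis .
qed

text \<open>Double counting the pairs of a flagged network and one of its prunable leaves.\<close>

theorem flagged_nets_recurrence:
  assumes "finite W"
  shows "card (flagged_nets W f) * ((card W - 1) div 2 - flag_weight f) =
    (\<Sum>x\<in>W. \<Sum>y\<in>W - {x}. \<Sum>g\<in>UNIV. card (flagged_nets (W - {x, y}) g) * flag_moves g f (card W - 3))"
  using card_prunings[OF assms] card_grafts[OF assms] bij_betw_same_card[OF bij_prune_map] by simp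

definition seven_net :: "nat \<Rightarrow> nat \<Rightarrow> nat \<Rightarrow> nat \<Rightarrow> nat \<Rightarrow> nat \<Rightarrow> nat \<Rightarrow> (nat \<times> nat) set" where
  "seven_net p a b r s t c = {(p, a), (p, b), (a, s), (a, r), (b, t), (b, r), (r, c)}"

context marked_net
begin

lemma distinct_seven: "distinct [\<rho>, a, b, r, a_child, b_child, c]"
  using special_children_distinct a_ne_root b_ne_root r_ne_root c_ne_root a_ne_b a_ne_r b_ne_r c_ne_r
    c_ne_a c_ne_b a_child_ne_r b_child_ne_r by auto

lemma inner_tree_verts_seven: "{\<rho>, a, b} \<subseteq> inner_tree_verts"
  unfolding inner_tree_verts_def
  using root_in a_in b_in children_root children_a children_b r_ne_root a_ne_r b_ne_r by auto

lemma card_V_ge_7: "card V \<ge> 7"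
proof -
  have "card {\<rho>, a, b} \<le> card inner_tree_verts"
    using inner_tree_verts_seven finite_V unfolding inner_tree_verts_def by (intro card_mono) auto
  then show ?thesis
    using card_inner_tree_verts distinct_seven by simp
qed

context
  assumes card_7: "card V = 7"
begin

lemma verts_seven: "V = {\<rho>, a, b, r, a_child, b_child, c}"
proof -
  have "{\<rho>, a, b, r, a_child, b_child, c} \<subseteq> V"
    using root_in a_in b_in r_in a_child_in b_child_in c_in by auto
  moreover have "card {\<rho>, a, b, r, a_child, b_child, c} = 7"
    using distinct_card[OF distinct_seven] by simp
  ultimately show ?thesis
    using card_subset_eq[OF finite_V] card_7 by metis
qed

lemma inner_tree_verts_eq_seven: "inner_tree_verts = {\<rho>, a, b}"
proof -
  have "card inner_tree_verts = 3"
    using card_inner_tree_verts card_7 by simp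
  moreover have "finite inner_tree_verts"
    using finite_V unfolding inner_tree_verts_def by simp
  ultimately show ?thesis
    using inner_tree_verts_seven distinct_seven card_subset_eq[of inner_tree_verts "{\<rho>, a, b}"] by simp
qed

lemma leaf_seven: "w \<in> V \<Longrightarrow> w \<notin> {\<rho>, a, b, r} \<Longrightarrow> children E w = {}"
  using inner_tree_verts_eq_seven unfolding inner_tree_verts_def by blast

lemma special_children_leaves_seven:
  "children E a_child = {}" "children E b_child = {}" "children E c = {}"
  using leaf_seven a_child_in b_child_in c_in distinct_seven by auto

lemma children_root_seven: "children E \<rho> = {a, b}"
proof -
  have "children E \<rho> \<subseteq> {a, b}"
  proof
    fix w
    assume "w \<in> children E \<rho>"
    then have w: "(\<rho>, w) \<in> E"
      unfolding children_def by simp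
    then have "w \<noteq> r"
      using parent_r_iff a_ne_root b_ne_root by auto
    then have "parents E w = {\<rho>}"
      by (rule parents_eq[OF w])
    then have "w \<notin> {\<rho>, r, a_child, b_child, c}"
      using rank[OF w] \<open>w \<noteq> r\<close> parents_a_child parents_b_child parents_c a_ne_root b_ne_root
        r_ne_root by auto
    then show "w \<in> {a, b}"
      using w edges verts_seven by auto
  qed
  moreover obtain u w where "u \<noteq> w" "children E \<rho> = {u, w}"
    using children_tree[OF root_in r_ne_root[symmetric]] children_root by auto
  ultimately show ?thesis
    by (auto simp: doubleton_eq_iff)
qed

lemma edges_seven: "E = seven_net \<rho> a b r a_child b_child c"
proof
  show "seven_net \<rho> a b r a_child b_child c \<subseteq> E"
    using children_root_seven a_child_edge b_child_edge a_r_edge b_r_edge r_c_edge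
    unfolding seven_net_def children_def by auto
  show "E \<subseteq> seven_net \<rho> a b r a_child b_child c"
  proof clarify
    fix u w
    assume e: "(u, w) \<in> E"
    then have "u \<in> {\<rho>, a, b, r, a_child, b_child, c}" and "w \<in> children E u"
      using edges verts_seven unfolding children_def by auto
    then show "(u, w) \<in> seven_net \<rho> a b r a_child b_child c"
      unfolding seven_net_def
      using children_root_seven children_a children_b children_r special_children_leaves_seven
      by (elim insertE) auto
  qed
qed

lemma leaf_flags_seven: "leaf_flags E a = (True, True, True)"
  unfolding leaf_flags_eq using special_children_leaves_seven by simp

end

end

lemma seven_net_marked_net:
  assumes d: "distinct [p, a, b, r, s, t, c]"
  shows "marked_net {p, a, b, r, s, t, c} (seven_net p a b r s t c) a p r b c
    (\<lambda>u. if u = p then 0 else if u = a \<or> u = b then 1 else if u = c then 3 else 2)"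
proof -
  let ?E = "seven_net p a b r s t c"
  let ?h = "\<lambda>u. if u = p then 0 else if u = a \<or> u = b then 1 else if u = c then 3 else 2 :: nat"
  have rank: "?h u < ?h w" if "(u, w) \<in> ?E" for u w
    using that d by (auto simp: seven_net_def)
  have no_path: "?h u < ?h w" if "(u, w) \<in> ?E\<^sup>+" for u w
    using that by (induction rule: trancl_induct) (use rank less_trans in blast)+
  have parents: "parents ?E p = {}" "parents ?E a = {p}" "parents ?E b = {p}" "parents ?E r = {a, b}"
    "parents ?E s = {a}" "parents ?E t = {b}" "parents ?E c = {r}"
    using d unfolding parents_def seven_net_def by auto
  have children: "children ?E p = {a, b}" "children ?E a = {s, r}" "children ?E b = {t, r}"
    "children ?E r = {c}" "children ?E s = {}" "children ?E t = {}" "children ?E c = {}"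
    using d unfolding children_def seven_net_def by auto
  show ?thesis
  proof
    show "children ?E v = {} \<or> (\<exists>c d. c \<noteq> d \<and> children ?E v = {c, d})"
      if "v \<in> {p, a, b, r, s, t, c}" "v \<noteq> r" for v
    proof -
      have "a \<noteq> b" "s \<noteq> r" "t \<noteq> r"
        using d by auto
      then show ?thesis
        using that children by (elim insertE) blast+
    qed
    show "v = p" if "v \<in> {p, a, b, r, s, t, c}" and "parents ?E v = {}" for v
      using that parents by (elim insertE) auto
    show "parents ?E v = {} \<or> (\<exists>q. parents ?E v = {q})" if "v \<in> {p, a, b, r, s, t, c}" "v \<noteq> r" for v
      using that parents by (elim insertE) auto
    show "(a, b) \<notin> ?E\<^sup>+" "(b, a) \<notin> ?E\<^sup>+"
      using no_path[of a b] no_path[of b a] d by auto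
    show "?E \<subseteq> {p, a, b, r, s, t, c} \<times> {p, a, b, r, s, t, c}"
      unfolding seven_net_def by auto
  qed (use rank parents children d in simp_all)
qed

lemma seven_net_inj:
  assumes d: "distinct [p, a, b, r, s, t, c]" and d': "distinct [p', a, b', r', s', t', c']"
    and V: "{p, a, b, r, s, t, c} = {p', a, b', r', s', t', c'}"
    and E: "seven_net p a b r s t c = seven_net p' a b' r' s' t' c'"
  shows "[p, a, b, r, s, t, c] = [p', a, b', r', s', t', c']"
proof -
  interpret N: marked_net "{p, a, b, r, s, t, c}" "seven_net p a b r s t c" a p r b c
    "\<lambda>u. if u = p then 0 else if u = a \<or> u = b then 1 else if u = c then 3 else 2"
    by (rule seven_net_marked_net[OF d])
  interpret N': marked_net "{p', a, b', r', s', t', c'}" "seven_net p a b r s t c" a p' r' b' c'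
    "\<lambda>u. if u = p' then 0 else if u = a \<or> u = b' then 1 else if u = c' then 3 else 2"
    using seven_net_marked_net[OF d'] E by simp
  have p: "p' = p"
    using N.root_unique N'.parents_root N'.root_in V by simp
  have rb: "r' = r \<and> b' = b"
    using N.reticulation_parents_unique[OF N'.a_ne_b N'.parents_r] .
  have c: "c' = c"
    using N.children_r N'.children_r rb by simp
  have "children (seven_net p a b r s t c) a = {s, r}" "children (seven_net p a b r s t c) b = {t, r}"
    using d unfolding children_def seven_net_def by auto
  moreover have "children (seven_net p' a b' r' s' t' c') a = {s', r'}"
    "children (seven_net p' a b' r' s' t' c') b' = {t', r'}"
    using d' unfolding children_def seven_net_def by auto
  ultimately have "{s, r} = {s', r}" and "{t, r} = {t', r}"
    using E rb by simp_all
  then have "s' = s \<and> t' = t"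
    using d d' rb by (auto simp: doubleton_eq_iff)
  then show ?thesis
    using p rb c by simp
qed

definition seven_net_of_list :: "nat list \<Rightarrow> (nat \<times> nat) set \<times> nat" where
  "seven_net_of_list xs = (seven_net (xs!0) (xs!1) (xs!2) (xs!3) (xs!4) (xs!5) (xs!6), xs!1)"

lemma length_7_list: "length xs = 7 \<Longrightarrow> \<exists>p a b r s t c. xs = [p, a, b, r, s, t, c]"
  by (simp add: numeral_eq_Suc length_Suc_conv) blast

context
  fixes W :: "nat set"
  assumes finite_W: "finite W" and card_W: "card W = 7"
begin

lemma set_seven_list: "length xs = 7 \<Longrightarrow> distinct xs \<Longrightarrow> set xs \<subseteq> W \<Longrightarrow> set xs = W"
  using distinct_card[of xs] card_subset_eq[OF finite_W, of "set xs"] card_W by simp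

lemma image_seven_net_of_list:
  "seven_net_of_list ` {xs. length xs = 7 \<and> distinct xs \<and> set xs \<subseteq> W} = flagged_nets W (True, True, True)"
proof
  show "seven_net_of_list ` {xs. length xs = 7 \<and> distinct xs \<and> set xs \<subseteq> W} \<subseteq> flagged_nets W (True, True, True)"
  proof (rule image_subsetI)
    fix xs :: "nat list"
    assume "xs \<in> {xs. length xs = 7 \<and> distinct xs \<and> set xs \<subseteq> W}"
    then have xs: "length xs = 7" "distinct xs" "set xs \<subseteq> W"
      by simp_all
    then obtain p a b r s t c where l: "xs = [p, a, b, r, s, t, c]"
      using length_7_list by blast
    interpret marked_net "{p, a, b, r, s, t, c}" "seven_net p a b r s t c" a p r b c
      "\<lambda>u. if u = p then 0 else if u = a \<or> u = b then 1 else if u = c then 3 else 2"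
      by (rule seven_net_marked_net) (use xs l in simp)
    have "{p, a, b, r, s, t, c} = W"
      using set_seven_list[OF xs] l by simp
    then show "seven_net_of_list xs \<in> flagged_nets W (True, True, True)"
      using is_marked_net leaf_flags_seven card_W l unfolding flagged_nets_def seven_net_of_list_def by simp
  qed
  show "flagged_nets W (True, True, True) \<subseteq> seven_net_of_list ` {xs. length xs = 7 \<and> distinct xs \<and> set xs \<subseteq> W}"
  proof
    fix N
    assume "N \<in> flagged_nets W (True, True, True)"
    then obtain E a where N: "N = (E, a)" and "is_marked_net W E a"
      unfolding flagged_nets_def by auto
    then obtain \<rho> r b c h where "marked_net W E a \<rho> r b c h"
      by (auto elim: is_marked_netE)
    then interpret marked_net W E a \<rho> r b c h .
    have "N = seven_net_of_list [\<rho>, a, b, r, a_child, b_child, c]"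
      using N edges_seven card_W unfolding seven_net_of_list_def by simp
    moreover have "[\<rho>, a, b, r, a_child, b_child, c] \<in> {xs. length xs = 7 \<and> distinct xs \<and> set xs \<subseteq> W}"
      using distinct_seven verts_seven card_W by auto
    ultimately show "N \<in> seven_net_of_list ` {xs. length xs = 7 \<and> distinct xs \<and> set xs \<subseteq> W}"
      by blast
  qed
qed

lemma inj_on_seven_net_of_list:
  "inj_on seven_net_of_list {xs. length xs = 7 \<and> distinct xs \<and> set xs \<subseteq> W}"
proof (rule inj_onI)
  fix xs ys :: "nat list"
  assume "xs \<in> {xs. length xs = 7 \<and> distinct xs \<and> set xs \<subseteq> W}"
    and "ys \<in> {xs. length xs = 7 \<and> distinct xs \<and> set xs \<subseteq> W}"
    and eq: "seven_net_of_list xs = seven_net_of_list ys"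
  then have xs: "length xs = 7" "distinct xs" "set xs \<subseteq> W" and ys: "length ys = 7" "distinct ys" "set ys \<subseteq> W"
    by simp_all
  obtain p a b r s t c where l: "xs = [p, a, b, r, s, t, c]"
    using length_7_list xs by blast
  obtain p' a' b' r' s' t' c' where l': "ys = [p', a', b', r', s', t', c']"
    using length_7_list ys by blast
  have a: "a' = a"
    using eq l l' unfolding seven_net_of_list_def by simp
  have E: "seven_net p a b r s t c = seven_net p' a b' r' s' t' c'"
    using eq l l' a unfolding seven_net_of_list_def by simp
  have "[p, a, b, r, s, t, c] = [p', a, b', r', s', t', c']"
    by (rule seven_net_inj[OF _ _ _ E]) (use xs ys l l' a set_seven_list[OF xs] set_seven_list[OF ys] in simp_all)
  then show "xs = ys"
    using l l' a by simp
qed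

lemma card_flagged_nets_7: "card (flagged_nets W (True, True, True)) = 5040"
proof -
  have "{1..7::nat} = {1, 2, 3, 4, 5, 6, 7}"
    by auto
  then have "card {xs. length xs = 7 \<and> distinct xs \<and> set xs \<subseteq> W} = 5040"
    using card_lists_distinct_length_eq[OF finite_W, of 7] card_W by simp
  then show ?thesis
    using card_image[OF inj_on_seven_net_of_list] image_seven_net_of_list by simp
qed

end

lemma flagged_nets_small:
  assumes "finite W" and "card W < 7 \<or> even (card W) \<or> card W = 7 \<and> f \<noteq> (True, True, True)"
  shows "flagged_nets W f = {}"
proof (rule ccontr)
  assume "flagged_nets W f \<noteq> {}"
  then obtain E a where "is_marked_net W E a" "leaf_flags E a = f"
    unfolding flagged_nets_def by auto
  then obtain \<rho> r b c h where "marked_net W E a \<rho> r b c h"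
    by (auto elim: is_marked_netE)
  then interpret marked_net W E a \<rho> r b c h .
  show False
    using card_V_ge_7 odd_card_V leaf_flags_seven assms \<open>leaf_flags E a = f\<close> by auto
qed

section \<open>Solving the recurrence\<close>

text \<open>The Taylor coefficients of \<open>(1 - 2 w) powr (-3/2)\<close>.\<close>

fun pow_m32_coeff :: "nat \<Rightarrow> real" where
  "pow_m32_coeff 0 = 1"
| "pow_m32_coeff (Suc m) = pow_m32_coeff m * (2 * real m + 3) / (real m + 1)"

text \<open>For \<open>n = 2 k + 1\<close>, a flag class with \<open>j\<close> cleared flags contains \<open>n! \<cdot> flag_class_coeff j k\<close>
  networks; these closed forms solve the recurrence below with the initial values at \<open>k = 3\<close>.\<close>

definition flag_class_coeff :: "nat \<Rightarrow> nat \<Rightarrow> real" where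
  "flag_class_coeff j k =
    (if j = 0 then pow_m32_coeff (k - 3)
     else if j = 1 then pow_m32_coeff (k - 2) - pow_m32_coeff (k - 3) - 2 ^ (k - 2)
     else if j = 2 then 2 * pow_m32_coeff (k - 1) - 4 * pow_m32_coeff (k - 2) + pow_m32_coeff (k - 3)
       - 2 ^ (k - 1)
     else 4 * pow_m32_coeff k - 12 * pow_m32_coeff (k - 1) + 9 * pow_m32_coeff (k - 2)
       - pow_m32_coeff (k - 3) - 3 * 2 ^ (k - 2))"

lemma flag_class_coeff_rec:
  assumes "k \<ge> 4" and "j \<le> 3"
  shows "flag_class_coeff j k * (real k + real j - 3) =
    flag_class_coeff j (k - 1) * (2 * real k + real j - 5) + real j * flag_class_coeff (j - 1) (k - 1)"
proof -
  obtain m where m: "k = m + 4"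
    using assms(1) by (metis add.commute le_Suc_ex)
  define X where "X = pow_m32_coeff m / ((real m + 1) * (real m + 2) * (real m + 3) * (real m + 4))"
  have c0: "pow_m32_coeff m = X * ((real m + 1) * (real m + 2) * (real m + 3) * (real m + 4))"
    unfolding X_def by simp
  have step: "pow_m32_coeff (Suc i) = Y * (2 * real i + 3) * Z"
    if "pow_m32_coeff i = Y * (real i + 1) * Z" for i Y Z
  proof -
    have "real i + 1 \<noteq> 0"
      by simp
    then show ?thesis
      using that by (simp del: pow_m32_coeff.simps add: pow_m32_coeff.simps(2))
  qed
  have c1: "pow_m32_coeff (m + 1) = X * ((2 * real m + 3) * (real m + 2) * (real m + 3) * (real m + 4))"
    using step[of m X "(real m + 2) * (real m + 3) * (real m + 4)"] c0 by (simp add: ac_simps)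
  have c2: "pow_m32_coeff (m + 2) = X * ((2 * real m + 3) * (2 * real m + 5) * (real m + 3) * (real m + 4))"
    using step[of "m + 1" "X * (2 * real m + 3)" "(real m + 3) * (real m + 4)"] c1
    by (simp add: ac_simps numeral_eq_Suc)
  have c3: "pow_m32_coeff (m + 3) = X * ((2 * real m + 3) * (2 * real m + 5) * (2 * real m + 7) * (real m + 4))"
    using step[of "m + 2" "X * (2 * real m + 3) * (2 * real m + 5)" "real m + 4"] c2
    by (simp add: ac_simps numeral_eq_Suc)
  have c4: "pow_m32_coeff (m + 4) =
      X * ((2 * real m + 3) * (2 * real m + 5) * (2 * real m + 7) * (2 * real m + 9))"
    using step[of "m + 3" "X * (2 * real m + 3) * (2 * real m + 5) * (2 * real m + 7)" 1] c3
    by (simp add: ac_simps numeral_eq_Suc)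
  have p: "(2::real) ^ (m + 2) = 4 * 2 ^ m" "(2::real) ^ (m + 3) = 8 * 2 ^ m" "(2::real) ^ (m + 1) = 2 * 2 ^ m"
    by (simp_all add: power_add)
  have i: "m + 4 - 3 = m + 1" "m + 4 - 2 = m + 2" "m + 4 - 1 = m + 3" "m + 3 - 3 = m" "m + 3 - 2 = m + 1"
    "m + 3 - 1 = m + 2" "m + 4 - 1 - 3 = m" "m + 4 - 1 - 2 = m + 1" "m + 4 - 1 - 1 = m + 2"
    by simp_all
  consider "j = 0" | "j = 1" | "j = 2" | "j = 3"
    using assms(2) by linarith
  then show ?thesis
    unfolding m flag_class_coeff_def i c0 c1 c2 c3 c4 p by cases (simp_all add: algebra_simps)
qed

definition cleared_flags :: "bool \<times> bool \<times> bool \<Rightarrow> nat" where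
  "cleared_flags g = 3 - flag_weight g"

definition flag_class_count :: "bool \<times> bool \<times> bool \<Rightarrow> nat \<Rightarrow> real" where
  "flag_class_count g n =
    (if odd n \<and> n \<ge> 7 then fact n * flag_class_coeff (cleared_flags g) ((n - 1) div 2) else 0)"

lemma UNIV_flags: "(UNIV :: (bool \<times> bool \<times> bool) set) =
  {(True, True, True), (True, True, False), (True, False, True), (True, False, False),
   (False, True, True), (False, True, False), (False, False, True), (False, False, False)}"
  by auto

lemma flag_weight_le: "flag_weight g \<le> 3"
  unfolding flag_weight_def by (cases g) auto

lemma sum_flag_moves:
  fixes F :: "nat \<Rightarrow> real"
  assumes "q \<ge> 3"
  shows "(\<Sum>g\<in>UNIV. F (cleared_flags g) * real (flag_moves g f q)) =
    F (cleared_flags f) * real (q - flag_weight f) + real (cleared_flags f) * F (cleared_flags f - 1)"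
proof -
  obtain f1 f2 f3 where f: "f = (f1, f2, f3)"
    by (cases f) auto
  show ?thesis
    unfolding f UNIV_flags using assms
    by (cases f1; cases f2; cases f3) (simp_all add: flag_moves_def flag_weight_def cleared_flags_def of_nat_diff)
qed

lemma flag_class_count_rec:
  assumes "odd n" and "n \<ge> 9"
  shows "flag_class_count f n * real ((n - 1) div 2 - flag_weight f) =
    real n * real (n - 1) * (\<Sum>g\<in>UNIV. flag_class_count g (n - 2) * real (flag_moves g f (n - 3)))"
proof -
  obtain k where k: "n = 2 * k + 1"
    using assms(1) oddE by blast
  have "k \<ge> 4"
    using assms(2) k by simp
  let ?j = "cleared_flags f"
  have j: "?j \<le> 3" "real ?j = 3 - real (flag_weight f)"
    using flag_weight_le[of f] unfolding cleared_flags_def by (simp_all add: of_nat_diff)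
  have count: "flag_class_count g (n - 2) = fact (n - 2) * flag_class_coeff (cleared_flags g) (k - 1)" for g
  proof -
    have "odd (n - 2)" "n - 2 \<ge> 7" "(n - 2 - 1) div 2 = k - 1"
      using assms k by auto
    then show ?thesis
      unfolding flag_class_count_def by simp
  qed
  have "(\<Sum>g\<in>UNIV. flag_class_count g (n - 2) * real (flag_moves g f (n - 3))) =
      fact (n - 2) * (\<Sum>g\<in>UNIV. flag_class_coeff (cleared_flags g) (k - 1) * real (flag_moves g f (n - 3)))"
    by (simp add: count sum_distrib_left mult.assoc)
  also have "\<dots> = fact (n - 2) * (flag_class_coeff ?j (k - 1) * (2 * real k + real ?j - 5)
      + real ?j * flag_class_coeff (?j - 1) (k - 1))"
    using sum_flag_moves[where F = "\<lambda>j. flag_class_coeff j (k - 1)", of "n - 3" f] assms(2) k j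
      flag_weight_le[of f] by (simp add: of_nat_diff)
  also have "\<dots> = fact (n - 2) * (flag_class_coeff ?j k * (real k + real ?j - 3))"
    using flag_class_coeff_rec[OF \<open>k \<ge> 4\<close> j(1)] by simp
  finally have sum: "(\<Sum>g\<in>UNIV. flag_class_count g (n - 2) * real (flag_moves g f (n - 3))) =
    fact (n - 2) * (flag_class_coeff ?j k * (real k + real ?j - 3))" .
  have "fact n = real n * real (n - 1) * (fact (n - 2) :: real)"
  proof -
    have "n = Suc (Suc (n - 2))"
      using assms(2) by simp
    then have "(fact n :: real) = fact (Suc (Suc (n - 2)))"
      by (metis)
    then show ?thesis
      using assms(2) by (simp add: of_nat_diff)
  qed
  moreover have "real ((n - 1) div 2 - flag_weight f) = real k + real ?j - 3"
    using k j flag_weight_le[of f] \<open>k \<ge> 4\<close> by (simp add: of_nat_diff)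
  ultimately show ?thesis
    unfolding sum using assms k by (simp add: flag_class_count_def)
qed

lemma flag_class_coeff_3: "flag_class_coeff j 3 = (if j = 0 then 1 else 0)"
  by (simp add: flag_class_coeff_def numeral_eq_Suc)

lemma flagged_nets_recurrence_real:
  assumes "finite W" and "card W \<ge> 9"
    and IH: "\<And>x y g. x \<in> W \<Longrightarrow> y \<in> W - {x} \<Longrightarrow>
      real (card (flagged_nets (W - {x, y}) g)) = flag_class_count g (card W - 2)"
  shows "real (card (flagged_nets W f)) * real ((card W - 1) div 2 - flag_weight f) =
    real (card W) * real (card W - 1) *
      (\<Sum>g\<in>UNIV. flag_class_count g (card W - 2) * real (flag_moves g f (card W - 3)))"
proof -
  let ?S = "\<Sum>g\<in>UNIV. flag_class_count g (card W - 2) * real (flag_moves g f (card W - 3))"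
  have "real (card (flagged_nets W f)) * real ((card W - 1) div 2 - flag_weight f) =
    (\<Sum>x\<in>W. \<Sum>y\<in>W - {x}. \<Sum>g\<in>UNIV.
      real (card (flagged_nets (W - {x, y}) g)) * real (flag_moves g f (card W - 3)))"
    using arg_cong[OF flagged_nets_recurrence[OF assms(1), of f], of real]
    by (simp only: of_nat_sum of_nat_mult)
  also have "\<dots> = (\<Sum>x\<in>W. \<Sum>y\<in>W - {x}. ?S)"
    using IH by (intro sum.cong) simp_all
  also have "\<dots> = real (card W) * real (card W - 1) * ?S"
    using assms(1) by (simp add: card_Diff_subset)
  finally show ?thesis .
qed

theorem card_flagged_nets:
  assumes "finite W"
  shows "real (card (flagged_nets W f)) = flag_class_count f (card W)"
  using assms
proof (induction "card W" arbitrary: W f rule: less_induct)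
  case less
  consider "card W < 7 \<or> even (card W) \<or> card W = 7 \<and> f \<noteq> (True, True, True)"
    | "card W = 7" "f = (True, True, True)" | "odd (card W)" "card W \<ge> 9"
  proof -
    have "odd (card W) \<and> card W \<ge> 9" if "\<not> (card W < 7 \<or> even (card W))" "card W \<noteq> 7"
      using that by presburger
    then show thesis
      using that by blast
  qed
  then show ?case
  proof cases
    case 1
    moreover have "flag_class_coeff (cleared_flags f) 3 = 0" if "f \<noteq> (True, True, True)"
      using that unfolding flag_class_coeff_3 cleared_flags_def flag_weight_def by (cases f) auto
    ultimately show ?thesis
      using flagged_nets_small[OF less.prems] unfolding flag_class_count_def by auto
  next
    case 2
    then show ?thesis
      using card_flagged_nets_7[OF less.prems]
      by (simp add: flag_class_count_def flag_class_coeff_3 cleared_flags_def flag_weight_def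
          fact_numeral)
  next
    case 3
    have IH: "real (card (flagged_nets (W - {x, y}) g)) = flag_class_count g (card W - 2)"
      if "x \<in> W" "y \<in> W - {x}" for x y g
    proof -
      have "card (W - {x, y}) = card W - 2"
        using that less.prems by (simp add: card_Diff_subset)
      then show ?thesis
        using less.hyps[of "W - {x, y}"] less.prems 3 by simp
    qed
    have "real ((card W - 1) div 2 - flag_weight f) \<noteq> 0"
      using 3 flag_weight_le[of f] by simp
    moreover have "real (card (flagged_nets W f)) * real ((card W - 1) div 2 - flag_weight f) =
      flag_class_count f (card W) * real ((card W - 1) div 2 - flag_weight f)"
      by (simp only: flagged_nets_recurrence_real[OF less.prems 3(2) IH] flag_class_count_rec[OF 3])
    ultimately show ?thesis
      by simp
  qed
qed

definition one_reticulation_normal :: "nat \<Rightarrow> (nat \<times> nat) set set" where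
  "one_reticulation_normal n = {E. normal_network n E \<and> card {v \<in> verts n. is_reticulation E v} = 1}"

context marked_net
begin

lemma weakly_connected: "u \<in> V \<Longrightarrow> v \<in> V \<Longrightarrow> (u, v) \<in> (E \<union> E\<inverse>)\<^sup>*"
proof -
  assume "u \<in> V" "v \<in> V"
  then have "(u, \<rho>) \<in> (E\<inverse>)\<^sup>*" "(\<rho>, v) \<in> E\<^sup>*"
    using reachable_from_root by (auto simp: rtrancl_converse)
  then have "(u, \<rho>) \<in> (E \<union> E\<inverse>)\<^sup>*" "(\<rho>, v) \<in> (E \<union> E\<inverse>)\<^sup>*"
    using rtrancl_mono[of "E\<inverse>" "E \<union> E\<inverse>"] rtrancl_mono[of E "E \<union> E\<inverse>"] by auto
  then show ?thesis
    by (rule rtrancl_trans)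
qed

lemma vertex_degrees:
  assumes "v \<in> V"
  shows "indeg E v = 0 \<and> outdeg E v = 2 \<or> indeg E v = 1 \<and> outdeg E v = 2 \<or>
    indeg E v = 2 \<and> outdeg E v = 1 \<or> indeg E v = 1 \<and> outdeg E v = 0"
proof -
  have out: "outdeg E v = (if children E v = {} then 0 else 2)" if "v \<noteq> r"
    using card_children_tree assms that unfolding outdeg_eq_card_children by simp
  consider "v = \<rho>" | "v = r" | "v \<noteq> \<rho>" "v \<noteq> r"
    by blast
  then show ?thesis
  proof cases
    case 1
    then show ?thesis
      using out r_ne_root parents_root children_root unfolding indeg_eq_card_parents by simp
  next
    case 2
    then show ?thesis
      using is_reticulation_iff assms unfolding is_reticulation_def by simp
  next
    case 3
    then obtain p where "parents E v = {p}"
      using parents_singleton[OF assms] by blast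
    then show ?thesis
      using out 3 unfolding indeg_eq_card_parents by simp
  qed
qed

lemma phylo_network:
  assumes "V = verts n"
  shows "phylo_network n E"
proof -
  have "{v \<in> V. indeg E v = 0} = {v \<in> V. parents E v = {}}"
    using finite_parents by (simp add: indeg_eq_card_parents)
  also have "\<dots> = {\<rho>}"
  proof (intro set_eqI iffI)
    show "v \<in> {\<rho>}" if "v \<in> {v \<in> V. parents E v = {}}" for v
      using that root_unique by simp
  qed (use root_in parents_root in simp)
  finally have roots: "{v \<in> V. indeg E v = 0} = {\<rho>}" .
  have "n \<ge> 1"
    using root_in assms unfolding verts_def by simp
  then show ?thesis
    unfolding phylo_network_def
    using roots assms edges acyclic weakly_connected vertex_degrees by simp
qed

lemma tree_child:
  assumes "V = verts n"
  shows "tree_child n E"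
  unfolding tree_child_def
proof (intro conjI ballI impI)
  show "phylo_network n E"
    using phylo_network[OF assms] .
  fix v
  assume v: "v \<in> verts n" and "outdeg E v \<noteq> 0"
  then have "children E v \<noteq> {}"
    unfolding outdeg_eq_card_children by auto
  moreover have "\<exists>w \<in> children E v. w \<noteq> r"
  proof (cases "v = r")
    case False
    then show ?thesis
      using children_tree[of v] v assms calculation by (metis insertCI)
  qed (use children_r c_ne_r in simp)
  ultimately show "\<exists>w. (v, w) \<in> E \<and> \<not> is_reticulation E w"
    using is_reticulation_iff edges unfolding children_def by blast
qed

lemma no_shortcut: "(u, v) \<in> E O E\<^sup>+ \<Longrightarrow> (u, v) \<notin> E"
proof
  assume "(u, v) \<in> E O E\<^sup>+" and e: "(u, v) \<in> E"
  then obtain w where "(u, w) \<in> E" and "(w, v) \<in> E\<^sup>+"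
    by blast
  then obtain q where w: "(u, w) \<in> E" "(w, q) \<in> E\<^sup>*" and q: "(q, v) \<in> E"
    by (meson tranclD2)
  then have uq: "(u, q) \<in> E\<^sup>+"
    by auto
  then have "q \<noteq> u"
    using acyclic by blast
  then have "v = r"
    using two_parents_reticulation[OF e q] by simp
  then have "u \<in> {a, b}" "q \<in> {a, b}"
    using e q parent_r_iff by auto
  then show False
    using uq \<open>q \<noteq> u\<close> no_path_ab no_path_ba by auto
qed

lemma one_reticulation_normal:
  assumes "V = verts n"
  shows "E \<in> one_reticulation_normal n"
proof -
  have "{v \<in> verts n. is_reticulation E v} = {r}"
    using is_reticulation_iff r_in assms by auto
  then show ?thesis
    unfolding one_reticulation_normal_def normal_network_def
    using tree_child[OF assms] no_shortcut by simp
qed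

end

text \<open>The number of ancestors is a rank function.\<close>

lemma acyclic_rank:
  assumes "finite E" and "\<forall>v. (v, v) \<notin> E\<^sup>+"
  obtains h :: "nat \<Rightarrow> nat" where "\<And>u w. (u, w) \<in> E \<Longrightarrow> h u < h w"
proof
  have finite_ancestors: "finite {x. (x, u) \<in> E\<^sup>+}" for u
  proof -
    have "finite (fst ` E\<^sup>+)"
      using assms(1) finite_trancl by blast
    moreover have "{x. (x, u) \<in> E\<^sup>+} \<subseteq> fst ` E\<^sup>+"
      by force
    ultimately show ?thesis
      using finite_subset by blast
  qed
  fix u w
  assume e: "(u, w) \<in> E"
  have "{x. (x, u) \<in> E\<^sup>+} \<subset> {x. (x, w) \<in> E\<^sup>+}"
  proof
    show "{x. (x, u) \<in> E\<^sup>+} \<subseteq> {x. (x, w) \<in> E\<^sup>+}"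
      using e by (auto intro: trancl_into_trancl)
    show "{x. (x, u) \<in> E\<^sup>+} \<noteq> {x. (x, w) \<in> E\<^sup>+}"
      using e assms(2) by auto
  qed
  then show "card {x. (x, u) \<in> E\<^sup>+} < card {x. (x, w) \<in> E\<^sup>+}"
    by (rule psubset_card_mono[OF finite_ancestors])
qed

lemma normal_network_degrees:
  assumes "E \<in> one_reticulation_normal n" and ret: "{v \<in> verts n. is_reticulation E v} = {r}"
  shows "\<exists>\<rho>. {v \<in> verts n. parents E v = {}} = {\<rho>} \<and> children E \<rho> \<noteq> {}"
    and "\<exists>c. children E r = {c}"
    and "\<And>v. v \<in> verts n \<Longrightarrow> v \<noteq> r \<Longrightarrow> parents E v = {} \<or> (\<exists>p. parents E v = {p})"
    and "\<And>v. v \<in> verts n \<Longrightarrow> v \<noteq> r \<Longrightarrow>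
      children E v = {} \<or> (\<exists>c d. c \<noteq> d \<and> children E v = {c, d})"
proof -
  have phylo: "phylo_network n E"
    using assms(1) unfolding one_reticulation_normal_def normal_network_def tree_child_def by simp
  have "E \<subseteq> verts n \<times> verts n"
    using phylo unfolding phylo_network_def by simp
  then have "parents E v \<subseteq> verts n" "children E v \<subseteq> verts n" for v
    unfolding parents_def children_def by auto
  then have finite: "finite (parents E v)" "finite (children E v)" for v
    using finite_subset[OF _ finite_atLeastAtMost] unfolding verts_def by metis+
  have ret_r: "is_reticulation E r"
    using ret by auto
  then have "E \<noteq> {}"
    unfolding is_reticulation_def indeg_def by auto
  then have deg: "card {v \<in> verts n. indeg E v = 0} = 1"
    "\<And>v. v \<in> verts n \<Longrightarrow> indeg E v = 0 \<and> outdeg E v = 2 \<or> indeg E v = 1 \<and> outdeg E v = 2 \<or>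
       indeg E v = 2 \<and> outdeg E v = 1 \<or> indeg E v = 1 \<and> outdeg E v = 0"
    using phylo unfolding phylo_network_def by auto
  obtain \<rho> where \<rho>: "{v \<in> verts n. indeg E v = 0} = {\<rho>}"
    using card_1_singletonE[OF deg(1)] .
  moreover have "indeg E v = 0 \<longleftrightarrow> parents E v = {}" for v
    using finite unfolding indeg_eq_card_parents by simp
  ultimately have "{v \<in> verts n. parents E v = {}} = {\<rho>}"
    by simp
  moreover have "children E \<rho> \<noteq> {}"
    using deg(2)[of \<rho>] \<rho> unfolding outdeg_eq_card_children by force
  ultimately show "\<exists>\<rho>. {v \<in> verts n. parents E v = {}} = {\<rho>} \<and> children E \<rho> \<noteq> {}"
    by blast
  show "\<exists>c. children E r = {c}"
    using ret_r unfolding is_reticulation_def outdeg_eq_card_children by (meson card_1_singletonE)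
  fix v
  assume "v \<in> verts n" and "v \<noteq> r"
  then have "\<not> is_reticulation E v"
    using ret by auto
  then have "indeg E v \<le> 1" and "outdeg E v = 0 \<or> outdeg E v = 2"
    using deg(2)[OF \<open>v \<in> verts n\<close>] unfolding is_reticulation_def by auto
  then show "parents E v = {} \<or> (\<exists>p. parents E v = {p})"
    and "children E v = {} \<or> (\<exists>c d. c \<noteq> d \<and> children E v = {c, d})"
    using finite[of v] unfolding indeg_eq_card_parents outdeg_eq_card_children
    by (auto simp: le_Suc_eq card_1_singleton_iff card_2_iff)
qed

lemma normal_network_marked_net:
  assumes E: "E \<in> one_reticulation_normal n" and ret: "{v \<in> verts n. is_reticulation E v} = {r}"
    and r: "parents E r = {a, b}" "a \<noteq> b"
  shows "is_marked_net (verts n) E a"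
proof -
  have edges: "E \<subseteq> verts n \<times> verts n" and acyclic: "\<forall>v. (v, v) \<notin> E\<^sup>+"
    and no_shortcut: "\<forall>u v. (u, v) \<in> E O E\<^sup>+ \<longrightarrow> (u, v) \<notin> E"
    using E unfolding one_reticulation_normal_def normal_network_def tree_child_def phylo_network_def
    by auto
  obtain h :: "nat \<Rightarrow> nat" where h: "\<And>u w. (u, w) \<in> E \<Longrightarrow> h u < h w"
    using acyclic_rank[of E] acyclic finite_subset[OF edges] unfolding verts_def by blast
  obtain \<rho> where \<rho>: "{v \<in> verts n. parents E v = {}} = {\<rho>}" "children E \<rho> \<noteq> {}"
    using normal_network_degrees(1)[OF E ret] by blast
  obtain c where c: "children E r = {c}"
    using normal_network_degrees(2)[OF E ret] by blast
  have incomparable: "(u, w) \<notin> E\<^sup>+" if "(u, r) \<in> E" "(w, r) \<in> E" for u w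
  proof
    assume "(u, w) \<in> E\<^sup>+"
    then obtain x where "(u, x) \<in> E" "(x, w) \<in> E\<^sup>*"
      by (meson tranclD)
    then have "(u, r) \<in> E O E\<^sup>+"
      using that(2) by auto
    then show False
      using no_shortcut that(1) by blast
  qed
  have "marked_net (verts n) E a \<rho> r b c h"
  proof
    show "(a, b) \<notin> E\<^sup>+" "(b, a) \<notin> E\<^sup>+"
      using incomparable r unfolding parents_def by auto
  qed (use edges h \<rho> r c normal_network_degrees(3,4)[OF E ret] in \<open>auto simp: verts_def\<close>)
  then show ?thesis
    by (rule marked_net.is_marked_net)
qed

lemma card_marks:
  assumes "E \<in> one_reticulation_normal n"
  shows "card {a. is_marked_net (verts n) E a} = 2"
proof -
  have "card {v \<in> verts n. is_reticulation E v} = 1"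
    using assms unfolding one_reticulation_normal_def by simp
  then obtain r where ret: "{v \<in> verts n. is_reticulation E v} = {r}"
    by (rule card_1_singletonE)
  then have "card (parents E r) = 2"
    unfolding is_reticulation_def indeg_eq_card_parents by auto
  then obtain a b where ab: "a \<noteq> b" "parents E r = {a, b}"
    by (meson card_2_iff)
  have "{a. is_marked_net (verts n) E a} = parents E r"
  proof (intro set_eqI iffI)
    fix a'
    assume "a' \<in> {a. is_marked_net (verts n) E a}"
    then obtain \<rho>' r' b' c' h' where "marked_net (verts n) E a' \<rho>' r' b' c' h'"
      by (auto elim: is_marked_netE)
    then interpret N: marked_net "verts n" E a' \<rho>' r' b' c' h' .
    have "r' = r"
      using ret N.is_reticulation_iff N.r_in by blast
    then show "a' \<in> parents E r"
      using N.parents_r by simp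
  next
    fix a'
    assume "a' \<in> parents E r"
    then have "parents E r = {a', b} \<and> a' \<noteq> b \<or> parents E r = {a', a} \<and> a' \<noteq> a"
      using ab by auto
    then show "a' \<in> {a. is_marked_net (verts n) E a}"
      using normal_network_marked_net[OF assms ret] by blast
  qed
  then show ?thesis
    using ab by simp
qed

lemma card_marked_nets: "card (marked_nets (verts n)) = 2 * N1 n"
proof -
  have marked_nets: "marked_nets (verts n) = Sigma (one_reticulation_normal n) (\<lambda>E. {a. is_marked_net (verts n) E a})"
  proof (intro set_eqI iffI)
    fix N
    assume "N \<in> marked_nets (verts n)"
    then obtain E a \<rho> r b c h where N: "N = (E, a)" "marked_net (verts n) E a \<rho> r b c h"
      unfolding marked_nets_def by (auto elim: is_marked_netE)
    then show "N \<in> Sigma (one_reticulation_normal n) (\<lambda>E. {a. is_marked_net (verts n) E a})"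
      using marked_net.one_reticulation_normal marked_net.is_marked_net by blast
  qed (auto simp: marked_nets_def)
  have "finite (one_reticulation_normal n)"
    by (rule finite_subset[of _ "Pow (verts n \<times> verts n)"])
      (auto simp: one_reticulation_normal_def normal_network_def tree_child_def phylo_network_def verts_def)
  then have "card (marked_nets (verts n)) = (\<Sum>E\<in>one_reticulation_normal n. 2)"
    unfolding marked_nets using card_marks by (subst card_SigmaI) (auto intro: card_ge_0_finite)
  then show ?thesis
    unfolding N1_def one_reticulation_normal_def by simp
qed

section \<open>The generating function\<close>

lemma pow_m32_coeff_gchoose: "pow_m32_coeff k = ((-3/2 :: real) gchoose k) * (-2) ^ k"
proof (induction k)
  case (Suc k)
  have "(-3/2 :: real) * ((-3/2) gchoose k) = real k * ((-3/2) gchoose k) + real (Suc k) * ((-3/2) gchoose Suc k)"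
    by (rule gbinomial_mult_1)
  then have gchoose_Suc: "((-3/2 :: real) gchoose Suc k) = (-3/2 - real k) * ((-3/2) gchoose k) / real (Suc k)"
    by (simp add: field_simps)
  have "pow_m32_coeff (Suc k) = ((-3/2 :: real) gchoose k) * (-2) ^ k * (2 * real k + 3) / (real k + 1)"
    using Suc.IH by simp
  also have "\<dots> = ((-3/2 - real k) * ((-3/2) gchoose k) / real (Suc k)) * ((-2) * (-2) ^ k)"
    by (simp add: field_simps)
  finally show ?case
    unfolding gchoose_Suc by simp
qed simp

lemma pow_m32_coeff_sums:
  assumes "\<bar>2 * w\<bar> < 1"
  shows "(\<lambda>k. pow_m32_coeff k * w ^ k) sums ((1 - 2 * w) powr (-3/2))"
proof -
  have "\<bar>-2 * w\<bar> < 1"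
    using assms by simp
  from gen_binomial_real[OF this, of "-3/2"]
  have "(\<lambda>k. ((-3/2) gchoose k) * (-2 * w) ^ k) sums (1 + (-2 * w)) powr (-3/2)" .
  moreover have "((-3/2) gchoose k) * (-2 * w) ^ k = pow_m32_coeff k * w ^ k" for k
    using power_mult_distrib[of "-2" w k] by (simp add: pow_m32_coeff_gchoose)
  ultimately show ?thesis
    by simp
qed

text \<open>Every network carries two marks, so \<open>N1 (2 k + 1) = (2 k + 1)! \<cdot> N1_coeff k\<close> where
  \<open>N1_coeff k\<close> is half the sum of the eight flag class coefficients.\<close>

definition N1_coeff :: "nat \<Rightarrow> real" where
  "N1_coeff k = 2 * pow_m32_coeff k - (if k = 0 then 0 else 3 * pow_m32_coeff (k - 1))
     - 2 * 2 ^ k + (if k = 0 then 0 else 2 ^ (k - 1))"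

lemma N1_coeff_sums:
  assumes "\<bar>2 * w\<bar> < 1"
  shows "(\<lambda>k. N1_coeff k * w ^ k) sums ((2 - 3 * w) * (1 - 2 * w) powr (-3/2) - (2 - w) / (1 - 2 * w))"
proof -
  let ?S = "(1 - 2 * w) powr (-3/2)"
  have geometric: "(\<lambda>k. (2 * w) ^ k) sums (1 / (1 - 2 * w))"
    using geometric_sums[of "2 * w"] assms by simp
  have shifted: "(\<lambda>k. (if k = 0 then 0 else f (k - 1)) * w ^ k) sums (w * s)"
    if "(\<lambda>k. f k * w ^ k) sums s" for f s
  proof -
    let ?g = "\<lambda>k. (if k = 0 then 0 else f (k - 1)) * w ^ k"
    have "(\<lambda>k. ?g (Suc k)) = (\<lambda>k. w * (f k * w ^ k))"
      by (simp add: algebra_simps)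
    then have "(\<lambda>k. ?g (Suc k)) sums (w * s)"
      using sums_mult[OF that, of w] by simp
    then have "?g sums (w * s + ?g 0)"
      by (rule sums_Suc_iff[THEN iffD1])
    then show ?thesis
      by simp
  qed
  have sums: "(\<lambda>k. 2 * (pow_m32_coeff k * w ^ k) - (if k = 0 then 0 else 3 * pow_m32_coeff (k - 1)) * w ^ k
      - 2 * (2 * w) ^ k + (if k = 0 then 0 else 2 ^ (k - 1)) * w ^ k)
      sums (2 * ?S - w * (3 * ?S) - 2 * (1 / (1 - 2 * w)) + w * (1 / (1 - 2 * w)))"
    using pow_m32_coeff_sums[OF assms] geometric
      sums_mult[OF pow_m32_coeff_sums[OF assms], of 3] geometric[unfolded power_mult_distrib]
    by (intro sums_add sums_diff sums_mult shifted) (simp_all add: mult.assoc)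
  have "2 * S - w * (3 * S) - 2 * (1 / d) + w * (1 / d) = (2 - 3 * w) * S - (2 - w) / d"
    for S d :: real
    by (simp add: algebra_simps diff_divide_distrib)
  moreover have "(\<lambda>k. 2 * (pow_m32_coeff k * w ^ k) - (if k = 0 then 0 else 3 * pow_m32_coeff (k - 1)) * w ^ k
      - 2 * (2 * w) ^ k + (if k = 0 then 0 else 2 ^ (k - 1)) * w ^ k) = (\<lambda>k. N1_coeff k * w ^ k)"
    unfolding N1_coeff_def by (simp add: algebra_simps power_mult_distrib)
  ultimately show ?thesis
    using sums by simp
qed

lemma N1_coeff_eq_flag_classes:
  "k \<ge> 3 \<Longrightarrow> (\<Sum>g\<in>UNIV. flag_class_coeff (cleared_flags g) k) = 2 * N1_coeff k"
proof -
  assume "k \<ge> 3"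
  then obtain m where m: "k = m + 3"
    by (metis add.commute le_Suc_ex)
  have p: "(2::real) ^ (m + 3) = 8 * 2 ^ m" "(2::real) ^ (m + 2) = 4 * 2 ^ m" "(2::real) ^ (m + 1) = 2 * 2 ^ m"
    by (simp_all add: power_add)
  have i: "m + 3 - 3 = m" "m + 3 - 2 = m + 1" "m + 3 - 1 = m + 2"
    by simp_all
  show ?thesis
    unfolding UNIV_flags m
    by (simp add: cleared_flags_def flag_weight_def flag_class_coeff_def N1_coeff_def i p
        del: pow_m32_coeff.simps)
qed

lemma N1_eq: "real (N1 n) = (if odd n then fact n * N1_coeff ((n - 1) div 2) else 0)"
proof -
  have "card (marked_nets (verts n)) = (\<Sum>g\<in>UNIV. card (flagged_nets (verts n) g))"
    using sum_marked_nets_by_flags[of "verts n" "\<lambda>_. 1"] unfolding verts_def by simp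
  then have "2 * real (N1 n) = (\<Sum>g\<in>UNIV. real (card (flagged_nets (verts n) g)))"
    unfolding card_marked_nets by (metis of_nat_mult of_nat_numeral of_nat_sum)
  also have "\<dots> = (\<Sum>g\<in>UNIV. flag_class_count g n)"
    using card_flagged_nets[of "verts n"] unfolding verts_def by simp
  finally have sum: "2 * real (N1 n) = (\<Sum>g\<in>UNIV. flag_class_count g n)" .
  show ?thesis
  proof (cases "odd n \<and> n \<ge> 7")
    case True
    then have "(n - 1) div 2 \<ge> 3"
      by presburger
    then have "(\<Sum>g\<in>UNIV. flag_class_count g n) = fact n * (2 * N1_coeff ((n - 1) div 2))"
      using N1_coeff_eq_flag_classes[of "(n - 1) div 2"] True
      by (simp add: flag_class_count_def sum_distrib_left[symmetric])
    then show ?thesis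
      using sum True by simp
  next
    case False
    have "N1_coeff k = 0" if "k < 3" for k
      using that by (auto simp: N1_coeff_def numeral_eq_Suc less_Suc_eq)
    moreover have "odd n \<Longrightarrow> (n - 1) div 2 < 3"
      using False by presburger
    ultimately have "odd n \<Longrightarrow> N1_coeff ((n - 1) div 2) = 0"
      by blast
    then show ?thesis
      using sum False by (auto simp: flag_class_count_def)
  qed
qed

lemma N1_egf_sums:
  fixes z :: real
  assumes "\<bar>2 * z\<^sup>2\<bar> < 1"
  shows "(\<lambda>n. real (N1 n) * z ^ n / fact n) sums
    (z * ((2 - 3 * z\<^sup>2) * (1 - 2 * z\<^sup>2) powr (-3/2) - (2 - z\<^sup>2) / (1 - 2 * z\<^sup>2)))"
proof -
  let ?f = "\<lambda>n. real (N1 n) * z ^ n / fact n"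
  have "(\<lambda>k. ?f (2 * k + 1)) = (\<lambda>k. z * (N1_coeff k * (z\<^sup>2) ^ k))"
  proof
    fix k
    have "?f (2 * k + 1) = N1_coeff k * z ^ (2 * k + 1)"
      by (simp add: N1_eq)
    also have "\<dots> = z * (N1_coeff k * (z\<^sup>2) ^ k)"
      by (simp add: power_mult power_add)
    finally show "?f (2 * k + 1) = z * (N1_coeff k * (z\<^sup>2) ^ k)" .
  qed
  then have odd_terms: "(\<lambda>k. ?f (2 * k + 1)) sums
    (z * ((2 - 3 * z\<^sup>2) * (1 - 2 * z\<^sup>2) powr (-3/2) - (2 - z\<^sup>2) / (1 - 2 * z\<^sup>2)))"
    using sums_mult[OF N1_coeff_sums[OF assms], of z] by simp
  have "strict_mono (\<lambda>k::nat. 2 * k + 1)"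
    by (rule strict_monoI) simp
  moreover have "?f n = 0" if "n \<notin> range (\<lambda>k::nat. 2 * k + 1)" for n
  proof -
    have "even n"
      using that oddE by (metis rangeI)
    then show ?thesis
      by (simp add: N1_eq)
  qed
  ultimately show ?thesis
    using odd_terms sums_mono_reindex[of "\<lambda>k. 2 * k + 1" ?f] by simp
qed

lemma N1_egf_closed_form:
  fixes z :: real
  assumes "1 - 2 * z\<^sup>2 > 0"
  defines "t \<equiv> sqrt (1 - 2 * z\<^sup>2)"
  shows "(1 - 2 * z\<^sup>2) powr (3/2) = t ^ 3"
    and "(2 - 3 * z\<^sup>2) * (1 - 2 * z\<^sup>2) powr (-3/2) - (2 - z\<^sup>2) / (1 - 2 * z\<^sup>2) = (1 - t) ^ 3 / (2 * t ^ 3)"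
    and "a1 (z\<^sup>2) - b1 (z\<^sup>2) * t = (1 - t) ^ 3 / 2"
proof -
  have t: "t > 0" "1 - 2 * z\<^sup>2 = t\<^sup>2" and z: "z\<^sup>2 = (1 - t\<^sup>2) / 2"
    using assms(1) unfolding t_def by simp_all
  show powr: "(1 - 2 * z\<^sup>2) powr (3/2) = t ^ 3"
  proof -
    have "(1 - 2 * z\<^sup>2) powr (3/2) = (1 - 2 * z\<^sup>2) powr (1 + 1/2)"
      by simp
    also have "\<dots> = (1 - 2 * z\<^sup>2) powr 1 * (1 - 2 * z\<^sup>2) powr (1/2)"
      by (rule powr_add)
    also have "\<dots> = t\<^sup>2 * t"
      using assms(1) t(2) unfolding t_def by (simp add: powr_half_sqrt)
    finally show ?thesis
      by (simp add: power2_eq_square power3_eq_cube)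
  qed
  have "(1 - 2 * z\<^sup>2) powr (-3/2) = 1 / (1 - 2 * z\<^sup>2) powr (3/2)"
    by (simp add: powr_minus_divide)
  then have powr_minus: "(1 - 2 * z\<^sup>2) powr (-3/2) = 1 / t ^ 3"
    unfolding powr .
  show "(2 - 3 * z\<^sup>2) * (1 - 2 * z\<^sup>2) powr (-3/2) - (2 - z\<^sup>2) / (1 - 2 * z\<^sup>2) =
      (1 - t) ^ 3 / (2 * t ^ 3)"
    using t(1) by (unfold powr_minus, unfold t(2) z) (simp add: field_simps power2_eq_square power3_eq_cube)
  show "a1 (z\<^sup>2) - b1 (z\<^sup>2) * t = (1 - t) ^ 3 / 2"
    unfolding a1_def b1_def z by (simp add: field_simps power2_eq_square power3_eq_cube)
qed

theorem proposition1:
  fixes z :: real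
  assumes "\<bar>z\<bar> < 1 / sqrt 2"
  shows "(\<lambda>n. real (N1 n) * z ^ n / fact n) sums
           (z * (1 - sqrt (1 - 2 * z\<^sup>2)) ^ 3 / (2 * (1 - 2 * z\<^sup>2) powr (3/2)))
       \<and> z * (1 - sqrt (1 - 2 * z\<^sup>2)) ^ 3 / (2 * (1 - 2 * z\<^sup>2) powr (3/2))
         = z * (a1 (z\<^sup>2) - b1 (z\<^sup>2) * sqrt (1 - 2 * z\<^sup>2)) / (1 - 2 * z\<^sup>2) powr (3/2)"
proof -
  have "\<bar>z\<bar>\<^sup>2 < (1 / sqrt 2)\<^sup>2"
    using assms by (intro power_strict_mono) auto
  then have "z\<^sup>2 < 1 / 2"
    by (simp add: power_divide)
  then have "1 - 2 * z\<^sup>2 > 0" and "\<bar>2 * z\<^sup>2\<bar> < 1"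
    by simp_all
  note closed_form = N1_egf_closed_form[OF this(1)]
  show ?thesis
    using N1_egf_sums[OF \<open>\<bar>2 * z\<^sup>2\<bar> < 1\<close>] unfolding closed_form by simp
qed

end
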